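(* Let $(\mathcal B,<)$ be a monoidal poset with unique maximal element $B_0$. (i) For each $B\in\mathcal B$, each element $w\in W$ of minimal length such that $B=wB_0$, and each node $i$ with $l(r_iw)<l(w)$, we have $r_iB>B$. (ii) For each $B\in\mathcal B$, if $w,w'\in W$ are of minimal length such that $B=wB_0=w'B_0$, then $l(w)=l(w')$, and for each node $i$ with $r_iB>B$ there is $w''\in W$ of length $l(w)$ such that $B=w''B_0$ and $l(r_iw'')<l(w'')$.
   Context: Setting: $M$ is a spherical simply laced Coxeter diagram with nodes $1,\dots,n$ ($i\not\sim j$ means distinct nodes not joined by an edge, or equal); $W$ its Weyl group with length function $l$, positive roots $\Phi^+$, fundamental roots $\alpha_i$, reflections $r_i$, roots of squared length $2$; height $\mathrm{ht}(\sum a_k\alpha_k)=\sum a_k$. For a set $B$ of mutually orthogonal positive roots, $wB=\Phi^+\cap\{\pm w\beta:\beta\in B\}$. A $W$-orbit $\mathcal B$ of such sets is admissible if for every $B\in\mathcal B$, all nodes $i\not\sim j$ and root $\gamma$ with $\gamma,\gamma-\alpha_i+\alpha_j\in B$, $r_iB=r_jB$. For $B,C\in\mathcal B$ write $B\prec C$ if $B\ne C$ and the minimal height of an element of $B\setminus C$ is strictly smaller than the minimal height of an element of $C\setminus B$. For admissible $\mathcal B$, the monoidal poset $(\mathcal B,<)$ is $\mathcal B$ with the partial order $<$ given by the transitive closure of $\{(B,r_jB): B\in\mathcal B,\ j\text{ a node},\ B\prec r_jB\}$; $>$ is the reverse relation. Such a poset has a unique maximal element. *)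

theory Defs
  imports Main
begin

text \<open>Concrete model of a simply laced Coxeter diagram on the nodes 1..n, given by a
  symmetric irreflexive edge relation E.  Vectors of the root lattice are functions
  nat => int (coefficients with respect to the fundamental roots alpha_1..alpha_n).
  The Weyl group is the group of maps generated by the simple reflections r_i acting
  on these vectors; its elements are the maps themselves.\<close>

definition nodes :: "nat \<Rightarrow> nat set" where
  "nodes n = {1..n}"

definition salpha :: "nat \<Rightarrow> nat \<Rightarrow> int" where
  "salpha i = (\<lambda>k. if k = i then 1 else 0)"

definition cartan :: "(nat \<Rightarrow> nat \<Rightarrow> bool) \<Rightarrow> nat \<Rightarrow> nat \<Rightarrow> int" where
  "cartan E j k = (if j = k then 2 else if E j k then -1 else 0)"

definition cform :: "nat \<Rightarrow> (nat \<Rightarrow> nat \<Rightarrow> bool) \<Rightarrow> (nat \<Rightarrow> int) \<Rightarrow> (nat \<Rightarrow> int) \<Rightarrow> int" where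
  "cform n E u v = (\<Sum>j\<in>nodes n. \<Sum>k\<in>nodes n. u j * v k * cartan E j k)"

definition srefl :: "nat \<Rightarrow> (nat \<Rightarrow> nat \<Rightarrow> bool) \<Rightarrow> nat \<Rightarrow> (nat \<Rightarrow> int) \<Rightarrow> (nat \<Rightarrow> int)" where
  "srefl n E i v = (\<lambda>k. v k - cform n E v (salpha i) * salpha i k)"

text \<open>word_act [i1,...,ik] = r_i1 o ... o r_ik\<close>
definition word_act :: "nat \<Rightarrow> (nat \<Rightarrow> nat \<Rightarrow> bool) \<Rightarrow> nat list \<Rightarrow> (nat \<Rightarrow> int) \<Rightarrow> (nat \<Rightarrow> int)" where
  "word_act n E ws = foldr (\<lambda>i f. srefl n E i \<circ> f) ws id"

definition weyl :: "nat \<Rightarrow> (nat \<Rightarrow> nat \<Rightarrow> bool) \<Rightarrow> ((nat \<Rightarrow> int) \<Rightarrow> (nat \<Rightarrow> int)) set" where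
  "weyl n E = {word_act n E ws | ws. set ws \<subseteq> nodes n}"

definition wlen :: "nat \<Rightarrow> (nat \<Rightarrow> nat \<Rightarrow> bool) \<Rightarrow> ((nat \<Rightarrow> int) \<Rightarrow> (nat \<Rightarrow> int)) \<Rightarrow> nat" where
  "wlen n E w = (LEAST k. \<exists>ws. set ws \<subseteq> nodes n \<and> length ws = k \<and> word_act n E ws = w)"

definition sl_spherical :: "nat \<Rightarrow> (nat \<Rightarrow> nat \<Rightarrow> bool) \<Rightarrow> bool" where
  "sl_spherical n E \<longleftrightarrow> (\<forall>i j. E i j \<longrightarrow> E j i) \<and> (\<forall>i. \<not> E i i)
     \<and> (\<forall>i j. E i j \<longrightarrow> i \<in> nodes n \<and> j \<in> nodes n) \<and> finite (weyl n E)"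

definition roots :: "nat \<Rightarrow> (nat \<Rightarrow> nat \<Rightarrow> bool) \<Rightarrow> (nat \<Rightarrow> int) set" where
  "roots n E = {w (salpha i) | w i. w \<in> weyl n E \<and> i \<in> nodes n}"

definition pos_roots :: "nat \<Rightarrow> (nat \<Rightarrow> nat \<Rightarrow> bool) \<Rightarrow> (nat \<Rightarrow> int) set" where
  "pos_roots n E = {\<beta> \<in> roots n E. \<forall>k. 0 \<le> \<beta> k}"

definition ht :: "nat \<Rightarrow> (nat \<Rightarrow> int) \<Rightarrow> int" where
  "ht n \<beta> = (\<Sum>k\<in>nodes n. \<beta> k)"

definition orth_set :: "nat \<Rightarrow> (nat \<Rightarrow> nat \<Rightarrow> bool) \<Rightarrow> (nat \<Rightarrow> int) set \<Rightarrow> bool" where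
  "orth_set n E B \<longleftrightarrow> B \<subseteq> pos_roots n E \<and> (\<forall>\<beta>\<in>B. \<forall>\<gamma>\<in>B. \<beta> \<noteq> \<gamma> \<longrightarrow> cform n E \<beta> \<gamma> = 0)"

definition act_set :: "nat \<Rightarrow> (nat \<Rightarrow> nat \<Rightarrow> bool) \<Rightarrow> ((nat \<Rightarrow> int) \<Rightarrow> (nat \<Rightarrow> int))
     \<Rightarrow> (nat \<Rightarrow> int) set \<Rightarrow> (nat \<Rightarrow> int) set" where
  "act_set n E w B = {\<gamma> \<in> pos_roots n E. \<exists>\<beta>\<in>B. \<gamma> = w \<beta> \<or> \<gamma> = (\<lambda>k. - w \<beta> k)}"

definition admissible :: "nat \<Rightarrow> (nat \<Rightarrow> nat \<Rightarrow> bool) \<Rightarrow> (nat \<Rightarrow> int) set set \<Rightarrow> bool" where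
  "admissible n E \<B> \<longleftrightarrow>
     (\<exists>B. orth_set n E B \<and> \<B> = {act_set n E w B | w. w \<in> weyl n E}) \<and>
     (\<forall>B\<in>\<B>. \<forall>i\<in>nodes n. \<forall>j\<in>nodes n. (i = j \<or> \<not> E i j) \<longrightarrow>
        (\<forall>\<gamma>. \<gamma> \<in> B \<and> (\<lambda>k. \<gamma> k - salpha i k + salpha j k) \<in> B \<longrightarrow>
            act_set n E (srefl n E i) B = act_set n E (srefl n E j) B))"

definition prec :: "nat \<Rightarrow> (nat \<Rightarrow> int) set \<Rightarrow> (nat \<Rightarrow> int) set \<Rightarrow> bool" where
  "prec n B C \<longleftrightarrow> B \<noteq> C \<and> Min (ht n ` (B - C)) < Min (ht n ` (C - B))"

text \<open>The strict order < of the monoidal poset: pairs (B, C) meaning B < C.\<close>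
definition mon_less :: "nat \<Rightarrow> (nat \<Rightarrow> nat \<Rightarrow> bool) \<Rightarrow> (nat \<Rightarrow> int) set set
     \<Rightarrow> ((nat \<Rightarrow> int) set \<times> (nat \<Rightarrow> int) set) set" where
  "mon_less n E \<B> = {(B, act_set n E (srefl n E j) B) | B j.
       B \<in> \<B> \<and> j \<in> nodes n \<and> prec n B (act_set n E (srefl n E j) B)}\<^sup>+"

definition min_rep :: "nat \<Rightarrow> (nat \<Rightarrow> nat \<Rightarrow> bool) \<Rightarrow> (nat \<Rightarrow> int) set \<Rightarrow> (nat \<Rightarrow> int) set
     \<Rightarrow> ((nat \<Rightarrow> int) \<Rightarrow> (nat \<Rightarrow> int)) \<Rightarrow> bool" where
  "min_rep n E B0 B w \<longleftrightarrow> w \<in> weyl n E \<and> act_set n E w B0 = B \<and>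
     (\<forall>w'\<in>weyl n E. act_set n E w' B0 = B \<longrightarrow> wlen n E w \<le> wlen n E w')"

end

theory Submission
  imports Defs Complex_Main
begin

(* Let the depth of X be the number of simple reflections needed to reach X from B0 inside the
   orbit. The heart of the proof is that every generating step X < r_i X of the monoidal order
   lowers the depth. This goes by induction on the depth, using the commutation and braid
   relations between r_i and r_j and, in the commuting case, admissibility. Whether X \<prec> r_i X
   holds is decided by a combinatorial ascent condition on the pairings of the roots in X with
   alpha_i; it rests on the positive definiteness of the Cartan form, which makes distinct
   positive roots pair to -1, 0 or 1. For a minimal representative w of X the depth of X is l(w).
   So a left descent of w lowers the depth of r_i X, which forces X < r_i X; conversely
   X < r_i X gives a shorter word to r_i X, and prefixing it with r_i gives a minimal
   representative of X with a left descent at i. *)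

section \<open>Reflections, the Weyl group and roots\<close>

lemma finite_nodes [simp]: "finite (nodes n)"
  by (simp add: nodes_def)

lemma cform_add_left: "cform n E (\<lambda>k. u k + v k) z = cform n E u z + cform n E v z"
  by (simp add: cform_def algebra_simps sum.distrib)

lemma cform_diff_left: "cform n E (\<lambda>k. u k - v k) z = cform n E u z - cform n E v z"
  by (simp add: cform_def algebra_simps sum_subtractf)

lemma cform_scale_left: "cform n E (\<lambda>k. c * u k) z = c * cform n E u z"
  by (simp add: cform_def algebra_simps sum_distrib_left)

lemma cform_uminus_left: "cform n E (\<lambda>k. - u k) z = - cform n E u z"
  by (simp add: cform_def sum_negf)

lemma cform_add_right: "cform n E z (\<lambda>k. u k + v k) = cform n E z u + cform n E z v"
  by (simp add: cform_def algebra_simps sum.distrib)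

lemma cform_diff_right: "cform n E z (\<lambda>k. u k - v k) = cform n E z u - cform n E z v"
  by (simp add: cform_def algebra_simps sum_subtractf)

lemma cform_scale_right: "cform n E z (\<lambda>k. c * u k) = c * cform n E z u"
  by (simp add: cform_def algebra_simps sum_distrib_left)

lemma cform_uminus_right: "cform n E z (\<lambda>k. - u k) = - cform n E z u"
  by (simp add: cform_def sum_negf)

lemma cform_salpha_left:
  assumes "i \<in> nodes n"
  shows "cform n E (salpha i) u = (\<Sum>k\<in>nodes n. u k * cartan E i k)"
proof -
  have "cform n E (salpha i) u
      = (\<Sum>j\<in>nodes n. if j = i then (\<Sum>k\<in>nodes n. u k * cartan E j k) else 0)"
    unfolding cform_def salpha_def by (intro sum.cong refl) (auto simp: mult.commute)
  with assms show ?thesis by (simp add: sum.delta')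
qed

lemma cform_salpha_salpha:
  assumes "i \<in> nodes n" "j \<in> nodes n"
  shows "cform n E (salpha i) (salpha j) = cartan E i j"
proof -
  have "(\<Sum>k\<in>nodes n. salpha j k * cartan E i k) = (\<Sum>k\<in>nodes n. if k = j then cartan E i k else 0)"
    by (intro sum.cong refl) (simp add: salpha_def)
  with assms show ?thesis by (simp add: cform_salpha_left sum.delta')
qed

lemma ht_diff: "ht n (\<lambda>k. u k - v k) = ht n u - ht n v"
  by (simp add: ht_def sum_subtractf)

lemma ht_add: "ht n (\<lambda>k. u k + v k) = ht n u + ht n v"
  by (simp add: ht_def sum.distrib)

lemma ht_uminus: "ht n (\<lambda>k. - u k) = - ht n u"
  by (simp add: ht_def sum_negf)

lemma ht_salpha: "i \<in> nodes n \<Longrightarrow> ht n (salpha i) = 1"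
  by (simp add: ht_def salpha_def)

lemma ht_srefl:
  assumes "i \<in> nodes n"
  shows "ht n (srefl n E i v) = ht n v - cform n E v (salpha i)"
proof -
  have "ht n (\<lambda>k. cform n E v (salpha i) * salpha i k) = cform n E v (salpha i)"
    using ht_salpha[OF assms] by (simp add: ht_def sum_distrib_left[symmetric])
  then show ?thesis by (simp add: srefl_def ht_diff)
qed

lemma srefl_fixes: "cform n E \<beta> (salpha i) = 0 \<Longrightarrow> srefl n E i \<beta> = \<beta>"
  by (simp add: srefl_def)

lemma word_act_Nil [simp]: "word_act n E [] = id"
  by (simp add: word_act_def)

lemma word_act_Cons [simp]: "word_act n E (i # ws) = srefl n E i \<circ> word_act n E ws"
  by (simp add: word_act_def)

lemma word_act_append: "word_act n E (ws @ vs) = word_act n E ws \<circ> word_act n E vs"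
  by (induction ws) (auto simp: comp_assoc)

lemma weyl_iff: "w \<in> weyl n E \<longleftrightarrow> (\<exists>ws. set ws \<subseteq> nodes n \<and> w = word_act n E ws)"
  by (auto simp: weyl_def)

lemma word_act_in_weyl: "set ws \<subseteq> nodes n \<Longrightarrow> word_act n E ws \<in> weyl n E"
  unfolding weyl_iff by blast

lemma id_in_weyl: "id \<in> weyl n E"
  using word_act_in_weyl[of "[]"] by simp

lemma comp_in_weyl: "w \<in> weyl n E \<Longrightarrow> v \<in> weyl n E \<Longrightarrow> w \<circ> v \<in> weyl n E"
proof -
  assume "w \<in> weyl n E" "v \<in> weyl n E"
  then obtain ws vs where "set ws \<subseteq> nodes n" "set vs \<subseteq> nodes n"
    "w = word_act n E ws" "v = word_act n E vs"
    by (auto simp: weyl_iff)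
  then show ?thesis
    using word_act_in_weyl[of "ws @ vs"] by (simp add: word_act_append)
qed

lemma srefl_in_weyl: "i \<in> nodes n \<Longrightarrow> srefl n E i \<in> weyl n E"
  using word_act_in_weyl[of "[i]"] by simp

lemma wlen_word_act_le: "set ws \<subseteq> nodes n \<Longrightarrow> wlen n E (word_act n E ws) \<le> length ws"
  unfolding wlen_def by (rule Least_le) blast

lemma reduced_word_exists:
  assumes "w \<in> weyl n E"
  obtains ws where "set ws \<subseteq> nodes n" "length ws = wlen n E w" "word_act n E ws = w"
proof -
  have "\<exists>k ws. set ws \<subseteq> nodes n \<and> length ws = k \<and> word_act n E ws = w"
    using assms by (auto simp: weyl_iff)
  from LeastI_ex[OF this] that show ?thesis
    unfolding wlen_def by blast
qed

lemma wlen_srefl_comp_le: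
  assumes "i \<in> nodes n" "w \<in> weyl n E"
  shows "wlen n E (srefl n E i \<circ> w) \<le> wlen n E w + 1"
proof -
  obtain ws where ws: "set ws \<subseteq> nodes n" "length ws = wlen n E w" "word_act n E ws = w"
    using reduced_word_exists[OF assms(2)] .
  have "wlen n E (word_act n E (i # ws)) \<le> length (i # ws)"
    using assms(1) ws(1) by (intro wlen_word_act_le) auto
  with ws show ?thesis by simp
qed

lemma srefl_apply: "srefl n E i v k = v k - cform n E v (salpha i) * salpha i k"
  by (simp add: srefl_def)

lemma cform_srefl_left:
  "cform n E (srefl n E i u) z = cform n E u z - cform n E u (salpha i) * cform n E (salpha i) z"
  by (simp add: srefl_def cform_diff_left cform_scale_left)

lemma cform_srefl_salpha_salpha:
  assumes "k \<in> nodes n" "l \<in> nodes n"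
  shows "cform n E (srefl n E k \<beta>) (salpha l)
       = cform n E \<beta> (salpha l) - cform n E \<beta> (salpha k) * cartan E k l"
  using assms by (simp add: cform_srefl_left cform_salpha_salpha)

lemma srefl_lincomb:
  "srefl n E i (\<lambda>k. a * u k + b * v k) = (\<lambda>k. a * srefl n E i u k + b * srefl n E i v k)"
  by (rule ext) (simp add: srefl_def cform_add_left cform_scale_left algebra_simps)

lemma srefl_outside_nodes: "i \<in> nodes n \<Longrightarrow> k \<notin> nodes n \<Longrightarrow> srefl n E i v k = v k"
  by (auto simp: srefl_def salpha_def)

lemma weyl_lincomb:
  assumes "w \<in> weyl n E"
  shows "w (\<lambda>k. a * u k + b * v k) = (\<lambda>k. a * w u k + b * w v k)"
proof -
  have "word_act n E ws (\<lambda>k. a * u k + b * v k) = (\<lambda>k. a * word_act n E ws u k + b * word_act n E ws v k)"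
    for ws by (induction ws) (simp_all add: srefl_lincomb)
  with assms show ?thesis by (auto simp: weyl_iff)
qed

lemma weyl_uminus: "w \<in> weyl n E \<Longrightarrow> w (\<lambda>k. - u k) = (\<lambda>k. - w u k)"
  using weyl_lincomb[of w n E "-1" u 0 u] by simp

lemma weyl_diff: "w \<in> weyl n E \<Longrightarrow> w (\<lambda>k. u k - c * v k) = (\<lambda>k. w u k - c * w v k)"
  using weyl_lincomb[of w n E 1 u "-c" v] by simp

lemma weyl_outside_nodes:
  assumes "w \<in> weyl n E" "k \<notin> nodes n"
  shows "w v k = v k"
proof -
  have "set ws \<subseteq> nodes n \<Longrightarrow> word_act n E ws v k = v k" for ws
    using assms(2) by (induction ws) (auto simp: srefl_outside_nodes)
  with assms(1) show ?thesis by (auto simp: weyl_iff)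
qed

lemma even_double_sum_sym:
  fixes f :: "'a \<Rightarrow> 'a \<Rightarrow> int"
  assumes "finite A" "\<And>j k. f j k = f k j" "\<And>j. even (f j j)"
  shows "even (\<Sum>j\<in>A. \<Sum>k\<in>A. f j k)"
  using assms(1)
proof (induction A rule: finite_induct)
  case (insert a A)
  have "(\<Sum>j\<in>insert a A. \<Sum>k\<in>insert a A. f j k)
      = f a a + 2 * (\<Sum>k\<in>A. f a k) + (\<Sum>j\<in>A. \<Sum>k\<in>A. f j k)"
    using insert assms(2) by (simp add: sum.distrib)
  with insert assms(3)[of a] show ?case by simp
qed simp

lemma sum_sum_quadratic_expand:
  fixes x :: "'i \<Rightarrow> real" and a :: "'w \<Rightarrow> 'i \<Rightarrow> 'k \<Rightarrow> real"
  shows "(\<Sum>i\<in>I. \<Sum>j\<in>I. x i * x j * (\<Sum>w\<in>Ws. \<Sum>k\<in>K. a w i k * a w j k))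
       = (\<Sum>w\<in>Ws. \<Sum>k\<in>K. (\<Sum>i\<in>I. x i * a w i k)\<^sup>2)"
proof -
  have "(\<Sum>i\<in>I. \<Sum>j\<in>I. x i * x j * (\<Sum>w\<in>Ws. \<Sum>k\<in>K. a w i k * a w j k))
      = (\<Sum>i\<in>I. \<Sum>j\<in>I. \<Sum>w\<in>Ws. \<Sum>k\<in>K. (x i * a w i k) * (x j * a w j k))"
    by (simp add: sum_distrib_left mult_ac)
  also have "\<dots> = (\<Sum>i\<in>I. \<Sum>w\<in>Ws. \<Sum>j\<in>I. \<Sum>k\<in>K. (x i * a w i k) * (x j * a w j k))"
    by (rule sum.cong[OF refl], rule sum.swap)
  also have "\<dots> = (\<Sum>i\<in>I. \<Sum>w\<in>Ws. \<Sum>k\<in>K. \<Sum>j\<in>I. (x i * a w i k) * (x j * a w j k))"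
    by (rule sum.cong[OF refl], rule sum.cong[OF refl], rule sum.swap)
  also have "\<dots> = (\<Sum>w\<in>Ws. \<Sum>i\<in>I. \<Sum>k\<in>K. \<Sum>j\<in>I. (x i * a w i k) * (x j * a w j k))"
    by (rule sum.swap)
  also have "\<dots> = (\<Sum>w\<in>Ws. \<Sum>k\<in>K. \<Sum>i\<in>I. \<Sum>j\<in>I. (x i * a w i k) * (x j * a w j k))"
    by (rule sum.cong[OF refl], rule sum.swap)
  also have "\<dots> = (\<Sum>w\<in>Ws. \<Sum>k\<in>K. (\<Sum>i\<in>I. x i * a w i k)\<^sup>2)"
    by (simp add: sum_product power2_eq_square)
  finally show ?thesis .
qed


lemma roots_iff: "\<beta> \<in> roots n E \<longleftrightarrow> (\<exists>w\<in>weyl n E. \<exists>i\<in>nodes n. \<beta> = w (salpha i))"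
  by (auto simp: roots_def)

lemma salpha_in_roots: "i \<in> nodes n \<Longrightarrow> salpha i \<in> roots n E"
  unfolding roots_iff by (metis id_apply id_in_weyl)

lemma weyl_root: "w \<in> weyl n E \<Longrightarrow> \<beta> \<in> roots n E \<Longrightarrow> w \<beta> \<in> roots n E"
  unfolding roots_iff by (metis comp_apply comp_in_weyl)

lemma srefl_root: "i \<in> nodes n \<Longrightarrow> \<beta> \<in> roots n E \<Longrightarrow> srefl n E i \<beta> \<in> roots n E"
  by (rule weyl_root[OF srefl_in_weyl])

lemma root_outside_nodes: "\<beta> \<in> roots n E \<Longrightarrow> k \<notin> nodes n \<Longrightarrow> \<beta> k = 0"
  by (auto simp: roots_iff weyl_outside_nodes salpha_def)

lemma salpha_pos_root: "i \<in> nodes n \<Longrightarrow> salpha i \<in> pos_roots n E"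
  using salpha_in_roots[of i n E] by (simp add: pos_roots_def salpha_def)

lemma cform_disjoint_support_nonpos:
  assumes "\<And>k. p k \<ge> 0" "\<And>k. q k \<ge> 0" "\<And>k. p k * q k = 0"
  shows "cform n E p q \<le> 0"
  unfolding cform_def
proof (intro sum_nonpos)
  fix j k
  show "p j * q k * cartan E j k \<le> 0"
  proof (cases "j = k")
    case True
    then show ?thesis using assms(3)[of j] by auto
  next
    case False
    then have "cartan E j k \<le> 0" by (simp add: cartan_def)
    with assms(1,2) show ?thesis by (simp add: mult_nonneg_nonpos)
  qed
qed

lemma pos_roots_subset: "pos_roots n E \<subseteq> roots n E"
  by (auto simp: pos_roots_def)

lemma act_set_subset_pos_roots: "act_set n E w B \<subseteq> pos_roots n E"
  by (auto simp: act_set_def)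

lemma orth_set_pos_root: "orth_set n E X \<Longrightarrow> \<beta> \<in> X \<Longrightarrow> \<beta> \<in> pos_roots n E"
  unfolding orth_set_def by auto

lemma orth_set_root: "orth_set n E X \<Longrightarrow> \<beta> \<in> X \<Longrightarrow> \<beta> \<in> roots n E"
  unfolding orth_set_def pos_roots_def by auto

lemma orth_set_cform: "orth_set n E X \<Longrightarrow> \<beta> \<in> X \<Longrightarrow> \<gamma> \<in> X \<Longrightarrow> \<beta> \<noteq> \<gamma> \<Longrightarrow> cform n E \<beta> \<gamma> = 0"
  unfolding orth_set_def by auto

lemma Min_image_less_Min_image_iff:
  fixes f g :: "'a \<Rightarrow> 'b :: linorder"
  assumes "finite S" "S \<noteq> {}"
  shows "Min (f ` S) < Min (g ` S) \<longleftrightarrow> (\<exists>a\<in>S. \<forall>b\<in>S. f a < g b)"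
proof -
  have "Min (f ` S) < Min (g ` S) \<longleftrightarrow> (\<exists>a\<in>S. f a < Min (g ` S))"
    using assms by (subst Min_less_iff) auto
  also have "\<dots> \<longleftrightarrow> (\<exists>a\<in>S. \<forall>b\<in>S. f a < g b)"
    using assms by (simp add: Min_gr_iff)
  finally show ?thesis .
qed

locale sl_diagram =
  fixes n :: nat and E :: "nat \<Rightarrow> nat \<Rightarrow> bool"
  assumes spherical: "sl_spherical n E"
begin

abbreviation ract :: "nat \<Rightarrow> (nat \<Rightarrow> int) set \<Rightarrow> (nat \<Rightarrow> int) set" where
  "ract i X \<equiv> act_set n E (srefl n E i) X"

lemma edge_sym: "E i j \<Longrightarrow> E j i"
  using spherical by (auto simp: sl_spherical_def)

lemma edge_irrefl: "\<not> E i i"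
  using spherical by (auto simp: sl_spherical_def)

lemma finite_weyl: "finite (weyl n E)"
  using spherical by (auto simp: sl_spherical_def)

lemma cartan_sym: "cartan E i j = cartan E j i"
  unfolding cartan_def using edge_sym by auto

lemma cform_sym: "cform n E u v = cform n E v u"
  unfolding cform_def by (subst sum.swap) (simp add: cartan_sym mult_ac)

lemma cform_salpha_self: "i \<in> nodes n \<Longrightarrow> cform n E (salpha i) (salpha i) = 2"
  by (simp add: cform_salpha_salpha cartan_def)

lemma cform_srefl_salpha: "i \<in> nodes n \<Longrightarrow> cform n E (srefl n E i u) (salpha i) = - cform n E u (salpha i)"
  by (simp add: cform_srefl_left cform_salpha_self)

lemma srefl_salpha: "i \<in> nodes n \<Longrightarrow> srefl n E i (salpha i) = (\<lambda>k. - salpha i k)"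
  by (rule ext) (simp add: srefl_def cform_salpha_self)

lemma srefl_srefl: "i \<in> nodes n \<Longrightarrow> srefl n E i (srefl n E i v) = v"
  by (rule ext) (simp add: srefl_def[of n E i "srefl n E i v"] cform_srefl_salpha, simp add: srefl_def)

lemma srefl_comp_srefl: "i \<in> nodes n \<Longrightarrow> srefl n E i \<circ> srefl n E i = id"
  by (rule ext) (simp add: srefl_srefl)

lemma cform_srefl_srefl:
  assumes "i \<in> nodes n"
  shows "cform n E (srefl n E i u) (srefl n E i v) = cform n E u v"
proof -
  have "cform n E (srefl n E i u) (srefl n E i v)
      = cform n E (srefl n E i u) v - cform n E v (salpha i) * cform n E (srefl n E i u) (salpha i)"
    by (simp add: srefl_def[of n E i v] cform_diff_right cform_scale_right)
  also have "\<dots> = cform n E u v"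
    using assms
    by (simp add: cform_srefl_salpha cform_srefl_left cform_sym[of "salpha i" v] cform_salpha_self
        algebra_simps)
  finally show ?thesis .
qed

lemma srefl_commute:
  assumes "i \<in> nodes n" "j \<in> nodes n" "i \<noteq> j" "\<not> E i j"
  shows "srefl n E i \<circ> srefl n E j = srefl n E j \<circ> srefl n E i"
proof -
  have "cform n E (salpha j) (salpha i) = 0" "cform n E (salpha i) (salpha j) = 0"
    using assms by (auto simp: cform_salpha_salpha cartan_def edge_sym)
  then show ?thesis
    by (intro ext) (simp add: srefl_def[of n E _ "srefl n E _ _"] cform_srefl_left, simp add: srefl_def)
qed

lemma srefl_braid:
  assumes "i \<in> nodes n" "j \<in> nodes n" "E i j"
  shows "srefl n E i \<circ> srefl n E j \<circ> srefl n E i = srefl n E j \<circ> srefl n E i \<circ> srefl n E j"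
proof -
  have "cform n E (salpha j) (salpha i) = -1" "cform n E (salpha i) (salpha j) = -1"
    using assms edge_irrefl[of i] by (auto simp: cform_salpha_salpha cartan_def edge_sym)
  moreover have "cform n E (salpha i) (salpha i) = 2" "cform n E (salpha j) (salpha j) = 2"
    using assms by (auto simp: cform_salpha_self)
  ultimately show ?thesis
    by (intro ext) (simp add: srefl_apply cform_srefl_left algebra_simps)
qed

lemma cform_weyl: "w \<in> weyl n E \<Longrightarrow> cform n E (w u) (w v) = cform n E u v"
proof -
  have "set ws \<subseteq> nodes n \<Longrightarrow> cform n E (word_act n E ws u) (word_act n E ws v) = cform n E u v" for ws
    by (induction ws) (simp_all add: cform_srefl_srefl)
  then show "w \<in> weyl n E \<Longrightarrow> ?thesis" by (auto simp: weyl_iff)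
qed

lemma weyl_inverse:
  assumes "w \<in> weyl n E"
  obtains v where "v \<in> weyl n E" "v \<circ> w = id" "w \<circ> v = id"
proof -
  have rev_cancel: "set ws \<subseteq> nodes n \<Longrightarrow> word_act n E (rev ws) \<circ> word_act n E ws = id" for ws
  proof (induction ws)
    case (Cons i ws)
    have "word_act n E (rev (i # ws)) \<circ> word_act n E (i # ws)
        = word_act n E (rev ws) \<circ> (srefl n E i \<circ> srefl n E i) \<circ> word_act n E ws"
      by (simp add: word_act_append comp_assoc)
    also have "\<dots> = word_act n E (rev ws) \<circ> word_act n E ws"
      using Cons.prems by (simp add: srefl_comp_srefl)
    also have "\<dots> = id"
      by (rule Cons.IH) (use Cons.prems in simp)
    finally show ?case .
  qed simp
  obtain ws where "set ws \<subseteq> nodes n" "w = word_act n E ws"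
    using assms by (auto simp: weyl_iff)
  with rev_cancel[of ws] rev_cancel[of "rev ws"] show ?thesis
    by (intro that[of "word_act n E (rev ws)"] word_act_in_weyl) auto
qed


section \<open>Positive definiteness of the form\<close>

lemma even_cform_self: "even (cform n E v v)"
  unfolding cform_def
proof (rule even_double_sum_sym)
  show "v j * v k * cartan E j k = v k * v j * cartan E k j" for j k
    using cartan_sym[of j k] by simp
qed (simp_all add: cartan_def)

(* Averaging the dot product over the finite group W gives a W-invariant positive definite
   form. On the fundamental roots it is proportional to cform along every edge, which transfers
   positive definiteness to cform. *)

definition wdot :: "(nat \<Rightarrow> int) \<Rightarrow> (nat \<Rightarrow> int) \<Rightarrow> int" where
  "wdot u v = (\<Sum>w\<in>weyl n E. \<Sum>k\<in>nodes n. w u k * w v k)"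

lemma wdot_sym: "wdot u v = wdot v u"
  unfolding wdot_def by (simp add: mult.commute)

lemma wdot_diff_left: "wdot (\<lambda>k. u k - c * v k) z = wdot u z - c * wdot v z"
  unfolding wdot_def by (simp add: weyl_diff algebra_simps sum_subtractf sum_distrib_left)

lemma wdot_uminus_left: "wdot (\<lambda>k. - u k) z = - wdot u z"
  unfolding wdot_def by (simp add: weyl_uminus sum_negf)

lemma wdot_srefl:
  assumes "i \<in> nodes n"
  shows "wdot (srefl n E i u) (srefl n E i v) = wdot u v"
proof -
  have "(\<Sum>w\<in>weyl n E. \<Sum>k\<in>nodes n. w u k * w v k)
      = (\<Sum>w\<in>weyl n E. \<Sum>k\<in>nodes n. (w \<circ> srefl n E i) u k * (w \<circ> srefl n E i) v k)"
    by (rule sum.reindex_bij_witness[where i = "\<lambda>w. w \<circ> srefl n E i" and j = "\<lambda>w. w \<circ> srefl n E i"])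
       (use assms in \<open>auto simp: comp_assoc srefl_comp_srefl comp_in_weyl srefl_in_weyl\<close>)
  then show ?thesis unfolding wdot_def by simp
qed

lemma wdot_salpha:
  assumes i: "i \<in> nodes n"
  shows "2 * wdot (salpha i) v = cform n E v (salpha i) * wdot (salpha i) (salpha i)"
proof -
  let ?c = "cform n E v (salpha i)"
  have "wdot (salpha i) v = wdot (srefl n E i (salpha i)) (srefl n E i v)"
    using wdot_srefl[OF i] by simp
  also have "\<dots> = - wdot (salpha i) (\<lambda>k. v k - ?c * salpha i k)"
    using i by (simp add: srefl_salpha srefl_def[of n E i v] wdot_uminus_left)
  also have "wdot (salpha i) (\<lambda>k. v k - ?c * salpha i k) = wdot (\<lambda>k. v k - ?c * salpha i k) (salpha i)"
    by (rule wdot_sym)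
  also have "\<dots> = wdot v (salpha i) - ?c * wdot (salpha i) (salpha i)"
    by (rule wdot_diff_left)
  also have "wdot v (salpha i) = wdot (salpha i) v"
    by (rule wdot_sym)
  finally show ?thesis by simp
qed

lemma wdot_salpha_salpha:
  "i \<in> nodes n \<Longrightarrow> j \<in> nodes n \<Longrightarrow> 2 * wdot (salpha i) (salpha j) = cartan E i j * wdot (salpha i) (salpha i)"
  using wdot_salpha[of i "salpha j"] by (simp add: cform_salpha_salpha cartan_sym[of j i])

lemma wdot_salpha_self_pos:
  assumes i: "i \<in> nodes n"
  shows "wdot (salpha i) (salpha i) > 0"
proof -
  have "(\<Sum>k\<in>nodes n. w (salpha i) k * w (salpha i) k) \<ge> 0" for w :: "(nat \<Rightarrow> int) \<Rightarrow> nat \<Rightarrow> int"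
    by (intro sum_nonneg) simp
  then have "(\<Sum>k\<in>nodes n. id (salpha i) k * id (salpha i) k) \<le> wdot (salpha i) (salpha i)"
    unfolding wdot_def by (intro member_le_sum[OF id_in_weyl] finite_weyl)
  moreover have "(\<Sum>k\<in>nodes n. id (salpha i) k * id (salpha i) k) = 1"
    using i by (simp add: salpha_def if_distrib sum.delta' cong: if_cong)
  ultimately show ?thesis by simp
qed

lemma wdot_salpha_self_eq:
  assumes ij: "i \<in> nodes n" "j \<in> nodes n" and "cartan E i j \<noteq> 0"
  shows "wdot (salpha i) (salpha i) = wdot (salpha j) (salpha j)"
proof -
  have "cartan E i j * wdot (salpha i) (salpha i) = cartan E i j * wdot (salpha j) (salpha j)"
    using wdot_salpha_salpha[OF ij] wdot_salpha_salpha[OF ij(2,1)]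
      wdot_sym[of "salpha j" "salpha i"] cartan_sym[of j i] by simp
  with assms(3) show ?thesis by simp
qed

lemma cform_self_sum_squares:
  fixes v :: "nat \<Rightarrow> int"
  defines "x \<equiv> \<lambda>i. real_of_int (v i) * sqrt (2 / real_of_int (wdot (salpha i) (salpha i)))"
  shows "real_of_int (cform n E v v)
       = (\<Sum>w\<in>weyl n E. \<Sum>k\<in>nodes n. (\<Sum>i\<in>nodes n. x i * real_of_int (w (salpha i) k))\<^sup>2)"
proof -
  have pair: "real_of_int (v i * v j * cartan E i j) = x i * x j * real_of_int (wdot (salpha i) (salpha j))"
    if ij: "i \<in> nodes n" "j \<in> nodes n" for i j
  proof (cases "cartan E i j = 0")
    case True
    then show ?thesis using wdot_salpha_salpha[OF ij] by simp
  next
    case False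
    define g where "g = real_of_int (wdot (salpha i) (salpha i))"
    have g: "g > 0" using wdot_salpha_self_pos[OF ij(1)] by (simp add: g_def)
    have xx: "x i * x j = real_of_int (v i) * real_of_int (v j) * (2 / g)"
      using wdot_salpha_self_eq[OF ij False] g
      by (simp add: x_def g_def mult_ac real_sqrt_mult[symmetric])
    have ww: "real_of_int (wdot (salpha i) (salpha j)) = real_of_int (cartan E i j) * g / 2"
      using arg_cong[OF wdot_salpha_salpha[OF ij], of real_of_int] by (simp add: g_def)
    have "x i * x j * real_of_int (wdot (salpha i) (salpha j))
        = real_of_int (v i) * real_of_int (v j) * (2 / g) * (real_of_int (cartan E i j) * g / 2)"
      by (simp only: xx ww)
    also have "\<dots> = real_of_int (v i * v j * cartan E i j)"
      using g by simp
    finally show ?thesis by simp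
  qed
  have "real_of_int (cform n E v v) = (\<Sum>i\<in>nodes n. \<Sum>j\<in>nodes n. real_of_int (v i * v j * cartan E i j))"
    by (simp add: cform_def)
  also have "\<dots> = (\<Sum>i\<in>nodes n. \<Sum>j\<in>nodes n. x i * x j * (\<Sum>w\<in>weyl n E. \<Sum>k\<in>nodes n.
      real_of_int (w (salpha i) k) * real_of_int (w (salpha j) k)))"
    using pair by (simp add: wdot_def)
  also have "\<dots> = (\<Sum>w\<in>weyl n E. \<Sum>k\<in>nodes n. (\<Sum>i\<in>nodes n. x i * real_of_int (w (salpha i) k))\<^sup>2)"
    by (rule sum_sum_quadratic_expand)
  finally show ?thesis .
qed

lemma cform_self_pos:
  assumes k: "k \<in> nodes n" "v k \<noteq> 0"
  shows "cform n E v v > 0"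
proof -
  define x where "x i = real_of_int (v i) * sqrt (2 / real_of_int (wdot (salpha i) (salpha i)))" for i
  have id_term: "(\<Sum>i\<in>nodes n. x i * real_of_int (salpha i l)) = x l" if "l \<in> nodes n" for l
    using that by (simp add: salpha_def if_distrib sum.delta cong: if_cong)
  have "x k \<noteq> 0"
    using k wdot_salpha_self_pos[OF k(1)] by (simp add: x_def)
  then have "0 < (x k)\<^sup>2" by simp
  also have "\<dots> \<le> (\<Sum>l\<in>nodes n. (x l)\<^sup>2)"
    using k(1) by (intro member_le_sum) auto
  also have "\<dots> = (\<Sum>l\<in>nodes n. (\<Sum>i\<in>nodes n. x i * real_of_int (id (salpha i) l))\<^sup>2)"
    by (simp add: id_term)
  also have "\<dots> \<le> (\<Sum>w\<in>weyl n E. \<Sum>l\<in>nodes n. (\<Sum>i\<in>nodes n. x i * real_of_int (w (salpha i) l))\<^sup>2)"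
    by (rule member_le_sum[OF id_in_weyl]) (auto intro: sum_nonneg simp: finite_weyl)
  also have "\<dots> = real_of_int (cform n E v v)"
    unfolding x_def by (rule cform_self_sum_squares[symmetric])
  finally show ?thesis by simp
qed

lemma cform_self_ge_2:
  assumes "k \<in> nodes n" "v k \<noteq> 0"
  shows "cform n E v v \<ge> 2"
  using cform_self_pos[of k v, OF assms] even_cform_self[of v] by presburger

section \<open>Roots\<close>

lemma uminus_root: "\<beta> \<in> roots n E \<Longrightarrow> (\<lambda>k. - \<beta> k) \<in> roots n E"
proof -
  assume "\<beta> \<in> roots n E"
  then obtain w i where w: "w \<in> weyl n E" "i \<in> nodes n" "\<beta> = w (salpha i)"
    by (auto simp: roots_iff)
  then have "(\<lambda>k. - \<beta> k) = (w \<circ> srefl n E i) (salpha i)"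
    by (simp add: srefl_salpha weyl_uminus)
  with w show ?thesis
    unfolding roots_iff by (meson comp_in_weyl srefl_in_weyl)
qed

lemma cform_root_self: "\<beta> \<in> roots n E \<Longrightarrow> cform n E \<beta> \<beta> = 2"
  by (auto simp: roots_iff cform_weyl cform_salpha_self)

lemma cform_root_le_1:
  assumes "\<beta> \<in> roots n E" "\<gamma> \<in> roots n E" "\<beta> \<noteq> \<gamma>"
  shows "cform n E \<beta> \<gamma> \<le> 1"
proof -
  obtain k where "\<beta> k \<noteq> \<gamma> k" using assms(3) by blast
  moreover have "k \<in> nodes n"
    using calculation root_outside_nodes[OF assms(1)] root_outside_nodes[OF assms(2)] by fastforce
  ultimately have "cform n E (\<lambda>k. \<beta> k - \<gamma> k) (\<lambda>k. \<beta> k - \<gamma> k) \<ge> 2"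
    using cform_self_ge_2[of k "\<lambda>k. \<beta> k - \<gamma> k"] by simp
  moreover have "cform n E (\<lambda>k. \<beta> k - \<gamma> k) (\<lambda>k. \<beta> k - \<gamma> k) = 4 - 2 * cform n E \<beta> \<gamma>"
    using cform_root_self[OF assms(1)] cform_root_self[OF assms(2)] cform_sym[of \<gamma> \<beta>]
    by (simp add: cform_diff_left cform_diff_right)
  ultimately show ?thesis by simp
qed

lemma cform_root_ge_neg_1:
  assumes "\<beta> \<in> roots n E" "\<gamma> \<in> roots n E" "\<beta> \<noteq> (\<lambda>k. - \<gamma> k)"
  shows "cform n E \<beta> \<gamma> \<ge> -1"
  using cform_root_le_1[OF assms(1) uminus_root[OF assms(2)] assms(3)] by (simp add: cform_uminus_right)

(* A root with coefficients of both signs is p - q with p, q >= 0 nonzero of disjoint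
   support, and then (p - q, p - q) >= 2 + 2. *)

lemma root_nonneg_or_nonpos: "\<beta> \<in> roots n E \<Longrightarrow> (\<forall>k. 0 \<le> \<beta> k) \<or> (\<forall>k. \<beta> k \<le> 0)"
proof (rule ccontr)
  assume r: "\<beta> \<in> roots n E" and "\<not> ((\<forall>k. 0 \<le> \<beta> k) \<or> (\<forall>k. \<beta> k \<le> 0))"
  then obtain k1 k2 where k: "\<beta> k1 < 0" "\<beta> k2 > 0" by (auto simp: not_le)
  then have nodes: "k1 \<in> nodes n" "k2 \<in> nodes n"
    using root_outside_nodes[OF r] by fastforce+
  define p where "p k = max (\<beta> k) 0" for k
  define q where "q k = max (- \<beta> k) 0" for k
  have "\<beta> = (\<lambda>k. p k - q k)" by (auto simp: p_def q_def)
  then have "cform n E \<beta> \<beta> = cform n E p p - 2 * cform n E p q + cform n E q q"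
    using cform_sym[of q p] by (simp add: cform_diff_left cform_diff_right)
  moreover have "cform n E p q \<le> 0"
    by (rule cform_disjoint_support_nonpos) (auto simp: p_def q_def)
  moreover have "cform n E p p \<ge> 2" "cform n E q q \<ge> 2"
    using k nodes cform_self_ge_2[of k2 p] cform_self_ge_2[of k1 q] by (auto simp: p_def q_def)
  ultimately show False using cform_root_self[OF r] by linarith
qed

lemma root_pos_or_neg: "\<beta> \<in> roots n E \<Longrightarrow> \<beta> \<in> pos_roots n E \<or> (\<lambda>k. - \<beta> k) \<in> pos_roots n E"
  using root_nonneg_or_nonpos uminus_root by (fastforce simp: pos_roots_def)

lemma pos_root_ht_ge_1: "\<beta> \<in> pos_roots n E \<Longrightarrow> ht n \<beta> \<ge> 1"
proof -
  assume p: "\<beta> \<in> pos_roots n E"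
  then have r: "\<beta> \<in> roots n E" and nn: "\<And>k. 0 \<le> \<beta> k" by (auto simp: pos_roots_def)
  obtain k where k: "k \<in> nodes n" "\<beta> k \<noteq> 0"
  proof (rule ccontr)
    assume "\<not> thesis"
    then have "\<forall>k\<in>nodes n. \<beta> k = 0" using that by blast
    then have "cform n E \<beta> \<beta> = 0" by (simp add: cform_def)
    then show False using cform_root_self[OF r] by simp
  qed
  have "\<beta> k \<le> ht n \<beta>"
    unfolding ht_def using k(1) nn by (intro member_le_sum) auto
  then show ?thesis using k nn[of k] by linarith
qed

lemma uminus_pos_root_not_pos: "\<beta> \<in> pos_roots n E \<Longrightarrow> (\<lambda>k. - \<beta> k) \<notin> pos_roots n E"
  using pos_root_ht_ge_1[of \<beta>] pos_root_ht_ge_1[of "\<lambda>k. - \<beta> k"] by (auto simp: ht_uminus)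

lemma pos_root_ne_uminus: "\<beta> \<in> pos_roots n E \<Longrightarrow> \<gamma> \<in> pos_roots n E \<Longrightarrow> \<beta> \<noteq> (\<lambda>k. - \<gamma> k)"
  using uminus_pos_root_not_pos by fastforce

lemma ht_root_nonzero: "\<beta> \<in> roots n E \<Longrightarrow> ht n \<beta> \<noteq> 0"
  using root_pos_or_neg pos_root_ht_ge_1 ht_uminus by fastforce

lemma pos_root_ht_1:
  assumes p: "\<beta> \<in> pos_roots n E" and h: "ht n \<beta> = 1"
  obtains m where "m \<in> nodes n" "\<beta> = salpha m"
proof -
  have r: "\<beta> \<in> roots n E" and nn: "\<And>k. 0 \<le> \<beta> k" using p by (auto simp: pos_roots_def)
  have "ht n \<beta> \<noteq> 0" by (rule ht_root_nonzero[OF r])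
  then obtain m where m: "m \<in> nodes n" "\<beta> m \<noteq> 0" unfolding ht_def by (meson sum.neutral)
  have split: "ht n \<beta> = \<beta> m + (\<Sum>j\<in>nodes n - {m}. \<beta> j)"
    unfolding ht_def using m(1) by (simp add: sum.remove)
  have rest: "(\<Sum>j\<in>nodes n - {m}. \<beta> j) \<ge> 0" using nn by (simp add: sum_nonneg)
  have "\<beta> m = 1" using split rest h m(2) nn[of m] by linarith
  moreover have "\<forall>j\<in>nodes n - {m}. \<beta> j = 0"
    using split h \<open>\<beta> m = 1\<close> nn sum_nonneg_eq_0_iff[of "nodes n - {m}" \<beta>] by simp
  ultimately have "\<beta> = salpha m"
    using root_outside_nodes[OF r] unfolding salpha_def by (metis Diff_iff singletonD)
  with m(1) that show ?thesis by blast
qed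

lemma root_reflect:
  assumes b: "\<beta> \<in> roots n E" and g: "\<gamma> \<in> roots n E"
  shows "(\<lambda>k. \<gamma> k - cform n E \<gamma> \<beta> * \<beta> k) \<in> roots n E"
proof -
  obtain w i where w: "w \<in> weyl n E" "i \<in> nodes n" "\<beta> = w (salpha i)"
    using b by (auto simp: roots_iff)
  obtain v where v: "v \<in> weyl n E" "w \<circ> v = id"
    using weyl_inverse[OF w(1)] by blast
  have wv: "w (v x) = x" for x using v(2) by (metis comp_apply id_apply)
  have "cform n E (v \<gamma>) (salpha i) = cform n E \<gamma> \<beta>"
    using cform_weyl[OF w(1), of "v \<gamma>" "salpha i"] by (simp add: wv w(3))
  then have "w (srefl n E i (v \<gamma>)) = (\<lambda>k. \<gamma> k - cform n E \<gamma> \<beta> * \<beta> k)"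
    by (simp add: srefl_def weyl_diff[OF w(1)] wv w(3))
  moreover have "w (srefl n E i (v \<gamma>)) \<in> roots n E"
    by (intro weyl_root[OF w(1)] srefl_root[OF w(2)] weyl_root[OF v(1) g])
  ultimately show ?thesis by simp
qed

lemma root_diff_sub_salpha:
  assumes b1: "\<beta>1 \<in> roots n E" and b2: "\<beta>2 \<in> roots n E" and k: "k \<in> nodes n"
    and orth: "cform n E \<beta>2 \<beta>1 = 0"
    and c1: "cform n E \<beta>1 (salpha k) = -1" and c2: "cform n E \<beta>2 (salpha k) = 1"
  shows "(\<lambda>m. \<beta>2 m - \<beta>1 m - salpha k m) \<in> roots n E"
proof -
  have g: "srefl n E k \<beta>2 = (\<lambda>m. \<beta>2 m - salpha k m)" using c2 by (simp add: srefl_def)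
  have "cform n E (srefl n E k \<beta>2) \<beta>1 = 1"
    using orth c1 cform_sym[of "salpha k" \<beta>1] by (simp add: g cform_diff_left)
  then have "(\<lambda>m. \<beta>2 m - salpha k m - \<beta>1 m) \<in> roots n E"
    using root_reflect[OF b1 srefl_root[OF k b2]] by (simp add: g)
  then show ?thesis by (simp add: algebra_simps)
qed

section \<open>Reflecting orthogonal sets of roots\<close>

lemma finite_roots: "finite (roots n E)"
proof -
  have "roots n E = (\<lambda>(w, i). w (salpha i)) ` (weyl n E \<times> nodes n)"
    by (auto simp: roots_def)
  then show ?thesis using finite_weyl by simp
qed

lemma orth_set_finite: "orth_set n E X \<Longrightarrow> finite X"
  using finite_roots pos_roots_subset unfolding orth_set_def by (meson finite_subset)

lemma cform_pos_root_salpha_cases: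
  assumes "\<beta> \<in> pos_roots n E" "i \<in> nodes n" "\<beta> \<noteq> salpha i"
  shows "cform n E \<beta> (salpha i) \<in> {-1, 0, 1}"
proof -
  have r: "\<beta> \<in> roots n E" using assms(1) pos_roots_subset by blast
  have "cform n E \<beta> (salpha i) \<le> 1"
    by (rule cform_root_le_1[OF r salpha_in_roots[OF assms(2)] assms(3)])
  moreover have "cform n E \<beta> (salpha i) \<ge> -1"
    by (rule cform_root_ge_neg_1[OF r salpha_in_roots[OF assms(2)]
          pos_root_ne_uminus[OF assms(1) salpha_pos_root[OF assms(2)]]])
  ultimately show ?thesis by auto
qed

lemma act_set_comp:
  assumes w: "w \<in> weyl n E" and u: "u \<in> weyl n E" and B: "B \<subseteq> roots n E"
  shows "act_set n E (w \<circ> u) B = act_set n E w (act_set n E u B)"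
proof
  show "act_set n E (w \<circ> u) B \<subseteq> act_set n E w (act_set n E u B)"
  proof
    fix \<gamma> assume "\<gamma> \<in> act_set n E (w \<circ> u) B"
    then obtain \<beta> where g: "\<gamma> \<in> pos_roots n E" "\<beta> \<in> B" "\<gamma> = w (u \<beta>) \<or> \<gamma> = (\<lambda>k. - w (u \<beta>) k)"
      by (auto simp: act_set_def)
    have "u \<beta> \<in> roots n E" using weyl_root[OF u] B g(2) by auto
    then have "u \<beta> \<in> act_set n E u B \<or> (\<lambda>k. - u \<beta> k) \<in> act_set n E u B"
      using root_pos_or_neg g(2) by (auto simp: act_set_def)
    then show "\<gamma> \<in> act_set n E w (act_set n E u B)"
      using g weyl_uminus[OF w, of "u \<beta>"] unfolding act_set_def by auto
  qed
next
  show "act_set n E w (act_set n E u B) \<subseteq> act_set n E (w \<circ> u) B"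
    using weyl_uminus[OF w] by (auto simp: act_set_def)
qed

lemma act_set_id: "B \<subseteq> pos_roots n E \<Longrightarrow> act_set n E id B = B"
  unfolding act_set_def using uminus_pos_root_not_pos by fastforce

lemma orth_set_act_set:
  assumes B: "orth_set n E B" and w: "w \<in> weyl n E"
  shows "orth_set n E (act_set n E w B)"
  unfolding orth_set_def
proof (intro conjI ballI impI act_set_subset_pos_roots)
  fix \<gamma> \<gamma>' assume g: "\<gamma> \<in> act_set n E w B" "\<gamma>' \<in> act_set n E w B" "\<gamma> \<noteq> \<gamma>'"
  obtain \<beta> where b: "\<beta> \<in> B" "\<gamma> = w \<beta> \<or> \<gamma> = (\<lambda>k. - w \<beta> k)" "\<gamma> \<in> pos_roots n E"
    using g(1) by (auto simp: act_set_def)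
  obtain \<beta>' where b': "\<beta>' \<in> B" "\<gamma>' = w \<beta>' \<or> \<gamma>' = (\<lambda>k. - w \<beta>' k)" "\<gamma>' \<in> pos_roots n E"
    using g(2) by (auto simp: act_set_def)
  have "\<beta> \<noteq> \<beta>'"
  proof
    assume "\<beta> = \<beta>'"
    then have "\<gamma>' = (\<lambda>k. - \<gamma> k) \<or> \<gamma> = (\<lambda>k. - \<gamma>' k)" using b(2) b'(2) g(3) by auto
    then show False using pos_root_ne_uminus[OF b(3) b'(3)] pos_root_ne_uminus[OF b'(3) b(3)] by auto
  qed
  then have "cform n E (w \<beta>) (w \<beta>') = 0"
    using orth_set_cform[OF B b(1) b'(1)] cform_weyl[OF w] by simp
  then show "cform n E \<gamma> \<gamma>' = 0"
    using b(2) b'(2) by (auto simp: cform_uminus_left cform_uminus_right)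
qed

lemma srefl_pos_root:
  assumes b: "\<beta> \<in> pos_roots n E" and i: "i \<in> nodes n" and ne: "\<beta> \<noteq> salpha i"
  shows "srefl n E i \<beta> \<in> pos_roots n E"
proof (rule ccontr)
  assume np: "srefl n E i \<beta> \<notin> pos_roots n E"
  have r: "\<beta> \<in> roots n E" and nn: "\<And>k. 0 \<le> \<beta> k" using b by (auto simp: pos_roots_def)
  have "srefl n E i \<beta> \<in> roots n E" by (rule srefl_root[OF i r])
  with np have "\<forall>k. srefl n E i \<beta> k \<le> 0"
    using root_nonneg_or_nonpos by (auto simp: pos_roots_def)
  moreover have "srefl n E i \<beta> k = \<beta> k" if "k \<noteq> i" for k
    using that by (simp add: srefl_apply salpha_def)
  ultimately have "\<beta> k = 0" if "k \<noteq> i" for k using that nn[of k] by (metis order_antisym)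
  then have be: "\<beta> = (\<lambda>k. \<beta> i * salpha i k)"
    by (auto simp: salpha_def)
  have "2 = \<beta> i * \<beta> i * 2"
    using cform_root_self[OF r] by (subst (asm) (1 2) be) (simp add: cform_scale_left cform_scale_right cform_salpha_self[OF i])
  then have "\<beta> i = 1" using nn[of i] zmult_eq_1_iff[of "\<beta> i" "\<beta> i"] by auto
  then show False using be ne by simp
qed

lemma ract_salpha_mem:
  assumes X: "orth_set n E X" and i: "i \<in> nodes n" and a: "salpha i \<in> X"
  shows "ract i X = X"
proof -
  have fixed: "srefl n E i \<beta> = \<beta>" if "\<beta> \<in> X" "\<beta> \<noteq> salpha i" for \<beta>
    using orth_set_cform[OF X that(1) a that(2)] by (rule srefl_fixes)
  have not_pos: "(\<lambda>k. - \<beta> k) \<notin> pos_roots n E" if "\<beta> \<in> X" for \<beta>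
    by (rule uminus_pos_root_not_pos[OF orth_set_pos_root[OF X that]])
  show ?thesis
  proof
    show "ract i X \<subseteq> X"
    proof
      fix \<gamma> assume "\<gamma> \<in> ract i X"
      then obtain \<beta> where b: "\<gamma> \<in> pos_roots n E" "\<beta> \<in> X"
        "\<gamma> = srefl n E i \<beta> \<or> \<gamma> = (\<lambda>k. - srefl n E i \<beta> k)"
        by (auto simp: act_set_def)
      show "\<gamma> \<in> X"
      proof (cases "\<beta> = salpha i")
        case True
        then show ?thesis using b a not_pos[OF a] by (auto simp: srefl_salpha[OF i])
      next
        case False
        then show ?thesis using b not_pos fixed by auto
      qed
    qed
  next
    show "X \<subseteq> ract i X"
    proof
      fix \<beta> assume b: "\<beta> \<in> X"
      then have "\<beta> = srefl n E i \<beta> \<or> \<beta> = (\<lambda>k. - srefl n E i \<beta> k)"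
        using fixed by (cases "\<beta> = salpha i") (auto simp: srefl_salpha[OF i])
      then show "\<beta> \<in> ract i X"
        using b orth_set_pos_root[OF X b] unfolding act_set_def by blast
    qed
  qed
qed

lemma ract_eq_image:
  assumes X: "orth_set n E X" and i: "i \<in> nodes n" and a: "salpha i \<notin> X"
  shows "ract i X = srefl n E i ` X"
proof -
  have pos: "srefl n E i \<beta> \<in> pos_roots n E" if "\<beta> \<in> X" for \<beta>
    using srefl_pos_root[OF orth_set_pos_root[OF X that] i] a that by auto
  then have "(\<lambda>k. - srefl n E i \<beta> k) \<notin> pos_roots n E" if "\<beta> \<in> X" for \<beta>
    using uminus_pos_root_not_pos that by blast
  with pos show ?thesis by (auto simp: act_set_def)
qed

lemma ract_act_set:
  assumes "X \<subseteq> roots n E" "i \<in> nodes n" "w \<in> weyl n E"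
  shows "ract i (act_set n E w X) = act_set n E (srefl n E i \<circ> w) X"
  using act_set_comp[OF srefl_in_weyl[OF assms(2)] assms(3,1)] by simp

lemma ract_ract:
  assumes X: "orth_set n E X" and i: "i \<in> nodes n"
  shows "ract i (ract i X) = X"
proof -
  have "X \<subseteq> pos_roots n E" using X by (simp add: orth_set_def)
  with pos_roots_subset i show ?thesis
    by (simp add: ract_act_set srefl_in_weyl srefl_comp_srefl act_set_id subset_trans)
qed

lemma ract_commute:
  assumes X: "orth_set n E X" and "i \<in> nodes n" "j \<in> nodes n" "i \<noteq> j" "\<not> E i j"
  shows "ract i (ract j X)
       = ract j (ract i X)"
proof -
  have "X \<subseteq> roots n E" using X orth_set_root by blast
  with assms show ?thesis
    using srefl_commute[OF assms(2-5)] by (simp add: ract_act_set srefl_in_weyl)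
qed

lemma ract_braid:
  assumes X: "orth_set n E X" and i: "i \<in> nodes n" and j: "j \<in> nodes n" and e: "E i j"
  shows "ract j (ract i (ract j X))
       = ract i (ract j (ract i X))"
proof -
  have "X \<subseteq> roots n E" using X orth_set_root by blast
  then have "ract a (ract b (ract a X))
      = act_set n E (srefl n E a \<circ> srefl n E b \<circ> srefl n E a) X"
    if "a \<in> nodes n" "b \<in> nodes n" for a b
    using that by (simp add: ract_act_set srefl_in_weyl comp_in_weyl comp_assoc)
  from this[OF j i] this[OF i j] show ?thesis by (simp add: srefl_braid[OF i j e])
qed

section \<open>Ascents\<close>

definition ascent_root :: "(nat \<Rightarrow> int) set \<Rightarrow> nat \<Rightarrow> (nat \<Rightarrow> int) \<Rightarrow> bool" where
  "ascent_root X i \<beta> \<longleftrightarrow> \<beta> \<in> X \<and> cform n E \<beta> (salpha i) = -1 \<and>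
      (\<forall>\<gamma>\<in>X. cform n E \<gamma> (salpha i) = 1 \<longrightarrow> ht n \<beta> < ht n \<gamma>)"

definition ascent :: "(nat \<Rightarrow> int) set \<Rightarrow> nat \<Rightarrow> bool" where
  "ascent X i \<longleftrightarrow> (\<exists>\<beta>. ascent_root X i \<beta>)"

lemma ascent_salpha_notin:
  assumes X: "orth_set n E X" and i: "i \<in> nodes n" and "ascent X i"
  shows "salpha i \<notin> X"
proof
  assume a: "salpha i \<in> X"
  obtain \<beta> where b: "\<beta> \<in> X" "cform n E \<beta> (salpha i) = -1"
    using assms(3) by (auto simp: ascent_def ascent_root_def)
  then show False
    using orth_set_cform[OF X b(1) a] cform_salpha_self[OF i] by (cases "\<beta> = salpha i") auto
qed

lemma cform_orth_set_salpha_cases: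
  assumes "orth_set n E X" "i \<in> nodes n" "salpha i \<notin> X" "\<beta> \<in> X"
  shows "cform n E \<beta> (salpha i) \<in> {-1, 0, 1}"
  using assms cform_pos_root_salpha_cases[OF orth_set_pos_root] by metis

(* beta2 - beta1 - alpha_i is a root, so its height is not 0. *)

lemma ht_pairing_ne_Suc:
  assumes X: "orth_set n E X" and i: "i \<in> nodes n" and b: "\<beta>1 \<in> X" "\<beta>2 \<in> X"
    and c1: "cform n E \<beta>1 (salpha i) = -1" and c2: "cform n E \<beta>2 (salpha i) = 1"
  shows "ht n \<beta>2 \<noteq> ht n \<beta>1 + 1"
proof
  assume h: "ht n \<beta>2 = ht n \<beta>1 + 1"
  have "\<beta>2 \<noteq> \<beta>1" using c1 c2 by auto
  then have "(\<lambda>m. \<beta>2 m - \<beta>1 m - salpha i m) \<in> roots n E"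
    using root_diff_sub_salpha[OF orth_set_root[OF X b(1)] orth_set_root[OF X b(2)] i] orth_set_cform[OF X b(2,1)] c1 c2
    by blast
  moreover have "ht n (\<lambda>m. \<beta>2 m - \<beta>1 m - salpha i m) = 0" using h i by (simp add: ht_diff ht_salpha)
  ultimately show False using ht_root_nonzero by blast
qed

lemma diff_ract:
  assumes X: "orth_set n E X" and i: "i \<in> nodes n" and a: "salpha i \<notin> X"
  shows "X - ract i X = {\<beta>\<in>X. cform n E \<beta> (salpha i) \<noteq> 0}"
    and "ract i X - X = srefl n E i ` {\<beta>\<in>X. cform n E \<beta> (salpha i) \<noteq> 0}"
proof -
  have moved: "srefl n E i \<beta> \<notin> X" if b: "\<beta> \<in> X" "cform n E \<beta> (salpha i) \<noteq> 0" for \<beta>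
  proof
    assume r: "srefl n E i \<beta> \<in> X"
    have "cform n E \<beta> (salpha i) * cform n E \<beta> (salpha i) = 1"
      using cform_orth_set_salpha_cases[OF X i a b(1)] b(2) by auto
    then have "cform n E (srefl n E i \<beta>) \<beta> = 1"
      using cform_root_self[OF orth_set_root[OF X b(1)]] cform_sym[of "salpha i" \<beta>]
      by (simp add: cform_srefl_left)
    moreover have "srefl n E i \<beta> i \<noteq> \<beta> i"
      using b(2) by (simp add: srefl_apply salpha_def)
    ultimately show False
      using orth_set_cform[OF X r b(1)] by fastforce
  qed
  have R: "ract i X = srefl n E i ` X" by (rule ract_eq_image[OF X i a])
  show "X - ract i X = {\<beta>\<in>X. cform n E \<beta> (salpha i) \<noteq> 0}"
    unfolding R
  proof (intro equalityI subsetI)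
    fix \<beta> assume "\<beta> \<in> X - srefl n E i ` X"
    then show "\<beta> \<in> {\<beta>\<in>X. cform n E \<beta> (salpha i) \<noteq> 0}"
      using srefl_fixes[of n E \<beta> i] by force
  next
    fix \<beta> assume b: "\<beta> \<in> {\<beta>\<in>X. cform n E \<beta> (salpha i) \<noteq> 0}"
    have "\<beta> \<notin> srefl n E i ` X"
      using moved[of \<beta>] b srefl_srefl[OF i] by force
    with b show "\<beta> \<in> X - srefl n E i ` X" by simp
  qed
  show "ract i X - X = srefl n E i ` {\<beta>\<in>X. cform n E \<beta> (salpha i) \<noteq> 0}"
    unfolding R using moved srefl_fixes by auto
qed

lemma ascent_root_gap:
  assumes X: "orth_set n E X" and i: "i \<in> nodes n" and b: "ascent_root X i \<beta>"
    and g: "\<gamma> \<in> X" "cform n E \<gamma> (salpha i) = 1"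
  shows "ht n \<beta> + 2 \<le> ht n \<gamma>"
  using b g ht_pairing_ne_Suc[OF X i _ g(1) _ g(2), of \<beta>] by (fastforce simp: ascent_root_def)

lemma prec_ract_iff:
  assumes X: "orth_set n E X" and i: "i \<in> nodes n" and a: "salpha i \<notin> X"
  shows "prec n X (ract i X) \<longleftrightarrow>
    (\<exists>\<beta>\<in>X. cform n E \<beta> (salpha i) \<noteq> 0 \<and>
       (\<forall>\<gamma>\<in>X. cform n E \<gamma> (salpha i) \<noteq> 0 \<longrightarrow> ht n \<beta> < ht n \<gamma> - cform n E \<gamma> (salpha i)))"
    (is "prec n X ?R \<longleftrightarrow> (\<exists>\<beta>\<in>X. ?c \<beta> \<noteq> 0 \<and> _)")
proof -
  define S where "S = {\<beta>\<in>X. ?c \<beta> \<noteq> 0}"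
  have XR: "X - ?R = S" and RX: "ht n ` (?R - X) = (\<lambda>\<gamma>. ht n \<gamma> - ?c \<gamma>) ` S"
    using diff_ract[OF X i a] by (simp_all add: S_def image_image ht_srefl[OF i])
  show ?thesis
  proof (cases "S = {}")
    case True
    then have "?R = X" using diff_ract[OF X i a] by (auto simp: S_def)
    with True show ?thesis by (auto simp: prec_def S_def)
  next
    case False
    have "finite S" using orth_set_finite[OF X] by (simp add: S_def)
    have "X \<noteq> ?R" using XR False by auto
    then have "prec n X ?R \<longleftrightarrow> Min (ht n ` S) < Min ((\<lambda>\<gamma>. ht n \<gamma> - ?c \<gamma>) ` S)"
      by (simp add: prec_def XR RX)
    also have "\<dots> \<longleftrightarrow> (\<exists>\<beta>\<in>S. \<forall>\<gamma>\<in>S. ht n \<beta> < ht n \<gamma> - ?c \<gamma>)"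
      by (rule Min_image_less_Min_image_iff[OF \<open>finite S\<close> False])
    finally show ?thesis unfolding S_def by blast
  qed
qed

lemma ascent_lowest_moved_root:
  assumes X: "orth_set n E X" and i: "i \<in> nodes n" and a: "salpha i \<notin> X" and "ascent X i"
  obtains \<beta> where "\<beta> \<in> X" "cform n E \<beta> (salpha i) \<noteq> 0"
    "\<And>\<gamma>. \<gamma> \<in> X \<Longrightarrow> cform n E \<gamma> (salpha i) \<noteq> 0 \<Longrightarrow>
       ht n \<beta> < ht n \<gamma> - cform n E \<gamma> (salpha i)"
proof -
  let ?c = "\<lambda>\<beta>. cform n E \<beta> (salpha i)"
  obtain b where b: "ascent_root X i b" using assms(4) by (auto simp: ascent_def)
  define S where "S = {\<beta>\<in>X. ?c \<beta> \<noteq> 0}"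
  have "finite S" using orth_set_finite[OF X] by (simp add: S_def)
  moreover have "b \<in> S" using b by (simp add: ascent_root_def S_def)
  ultimately have "Min (ht n ` S) \<in> ht n ` S"
    by (intro Min_in) auto
  then obtain \<beta> where "\<beta> \<in> S" "ht n \<beta> = Min (ht n ` S)"
    by auto
  then have m: "\<beta> \<in> S" "\<And>\<gamma>. \<gamma> \<in> S \<Longrightarrow> ht n \<beta> \<le> ht n \<gamma>"
    using \<open>finite S\<close> by simp_all
  have "ht n \<beta> < ht n \<gamma> - ?c \<gamma>" if "\<gamma> \<in> S" for \<gamma>
  proof (cases "?c \<gamma> = 1")
    case True
    then have "ht n b + 2 \<le> ht n \<gamma>" using ascent_root_gap[OF X i b] that by (simp add: S_def)
    with True m(2)[OF \<open>b \<in> S\<close>] show ?thesis by simp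
  next
    case False
    then have "?c \<gamma> = -1" using that cform_orth_set_salpha_cases[OF X i a, of \<gamma>] by (auto simp: S_def)
    with m(2)[OF that] show ?thesis by simp
  qed
  with m(1) show ?thesis using that unfolding S_def by blast
qed

lemma prec_ract_iff_ascent:
  assumes X: "orth_set n E X" and i: "i \<in> nodes n"
  shows "prec n X (ract i X) \<longleftrightarrow> ascent X i"
proof (cases "salpha i \<in> X")
  case True
  then show ?thesis
    using ract_salpha_mem[OF X i True] ascent_salpha_notin[OF X i] by (auto simp: prec_def)
next
  case False
  let ?c = "\<lambda>\<beta>. cform n E \<beta> (salpha i)"
  show ?thesis
    unfolding prec_ract_iff[OF X i False]
  proof
    assume "\<exists>\<beta>\<in>X. ?c \<beta> \<noteq> 0 \<and> (\<forall>\<gamma>\<in>X. ?c \<gamma> \<noteq> 0 \<longrightarrow> ht n \<beta> < ht n \<gamma> - ?c \<gamma>)"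
    then obtain \<beta> where b: "\<beta> \<in> X" "?c \<beta> \<noteq> 0" "\<forall>\<gamma>\<in>X. ?c \<gamma> \<noteq> 0 \<longrightarrow> ht n \<beta> < ht n \<gamma> - ?c \<gamma>"
      by blast
    then have "ht n \<beta> < ht n \<beta> - ?c \<beta>" by blast
    then have "?c \<beta> = -1" using cform_orth_set_salpha_cases[OF X i False b(1)] by auto
    moreover have "ht n \<beta> < ht n \<gamma>" if "\<gamma> \<in> X" "?c \<gamma> = 1" for \<gamma>
      using b(3) that by force
    ultimately have "ascent_root X i \<beta>" using b(1) by (simp add: ascent_root_def)
    then show "ascent X i" by (auto simp: ascent_def)
  next
    assume "ascent X i"
    then show "\<exists>\<beta>\<in>X. ?c \<beta> \<noteq> 0 \<and> (\<forall>\<gamma>\<in>X. ?c \<gamma> \<noteq> 0 \<longrightarrow> ht n \<beta> < ht n \<gamma> - ?c \<gamma>)"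
      using ascent_lowest_moved_root[OF X i False] by metis
  qed
qed

(* If neither holds, the minima of the heights on X - r_i X and on r_i X - X agree, and they
   are attained at roots pairing with alpha_i to -1 and 1 whose heights differ by one. *)

lemma prec_ract_cases:
  assumes X: "orth_set n E X" and i: "i \<in> nodes n" and ne: "ract i X \<noteq> X"
  shows "prec n X (ract i X) \<or> prec n (ract i X) X"
    (is "prec n X ?R \<or> _")
proof -
  let ?c = "\<lambda>\<beta>. cform n E \<beta> (salpha i)"
  have a: "salpha i \<notin> X" using ract_salpha_mem[OF X i] ne by blast
  define S where "S = {\<beta>\<in>X. ?c \<beta> \<noteq> 0}"
  have XR: "X - ?R = S" and RX: "ht n ` (?R - X) = (\<lambda>\<gamma>. ht n \<gamma> - ?c \<gamma>) ` S"
    using diff_ract[OF X i a] by (simp_all add: S_def image_image ht_srefl[OF i])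
  have fin: "finite S" using orth_set_finite[OF X] by (simp add: S_def)
  have cases: "?c \<beta> = -1 \<or> ?c \<beta> = 1" if "\<beta> \<in> S" for \<beta>
    using cform_orth_set_salpha_cases[OF X i a] that by (auto simp: S_def)
  have "S \<noteq> {}" using ne diff_ract[OF X i a] by (auto simp: S_def)
  have "Min (ht n ` S) \<noteq> Min ((\<lambda>\<gamma>. ht n \<gamma> - ?c \<gamma>) ` S)"
  proof
    assume eq: "Min (ht n ` S) = Min ((\<lambda>\<gamma>. ht n \<gamma> - ?c \<gamma>) ` S)"
    have "Min (ht n ` S) \<in> ht n ` S" "Min ((\<lambda>\<gamma>. ht n \<gamma> - ?c \<gamma>) ` S) \<in> (\<lambda>\<gamma>. ht n \<gamma> - ?c \<gamma>) ` S"
      using fin \<open>S \<noteq> {}\<close> by (intro Min_in; simp)+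
    then obtain \<beta> \<gamma> where \<beta>: "\<beta> \<in> S" "ht n \<beta> = Min (ht n ` S)"
      and \<gamma>: "\<gamma> \<in> S" "ht n \<gamma> - ?c \<gamma> = Min (ht n ` S)"
      unfolding eq by auto
    have "ht n \<beta> \<le> ht n \<gamma>" using \<beta> \<gamma>(1) fin by simp
    then have "?c \<gamma> = 1" using \<beta>(2) \<gamma> cases[OF \<gamma>(1)] by auto
    have "Min (ht n ` S) \<le> ht n \<beta> - ?c \<beta>" using eq \<beta>(1) fin by simp
    then have "?c \<beta> = -1" using \<beta>(2) cases[OF \<beta>(1)] by auto
    show False
      using ht_pairing_ne_Suc[OF X i _ _ \<open>?c \<beta> = -1\<close> \<open>?c \<gamma> = 1\<close>] \<beta> \<gamma> \<open>?c \<gamma> = 1\<close>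
      by (simp add: S_def)
  qed
  then show ?thesis using ne by (auto simp: prec_def XR RX)
qed

lemma cform_ht_one_root_ne_1:
  assumes r: "\<delta> \<in> roots n E" and h: "ht n \<delta> = 1" and l: "l \<in> nodes n"
  shows "cform n E \<delta> (salpha l) \<noteq> 1"
proof -
  have "\<delta> \<in> pos_roots n E"
    using root_pos_or_neg[OF r] pos_root_ht_ge_1[of "\<lambda>k. - \<delta> k"] h by (auto simp: ht_uminus)
  then obtain m where "m \<in> nodes n" "\<delta> = salpha m" using pos_root_ht_1 h by blast
  with l show ?thesis by (simp add: cform_salpha_salpha cartan_def)
qed

lemma root_cform_salpha_eq_2:
  assumes "\<delta> \<in> roots n E" "l \<in> nodes n" "cform n E \<delta> (salpha l) = 2"
  shows "\<delta> = salpha l"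
  using cform_root_le_1[OF assms(1) salpha_in_roots[OF assms(2)]] assms(3) by fastforce

lemma ht_pairing_ne_add_2:
  assumes X: "orth_set n E X" and i: "i \<in> nodes n" and j: "j \<in> nodes n" and e: "E i j"
    and b: "\<beta>1 \<in> X" "\<beta>2 \<in> X"
    and c1: "cform n E \<beta>1 (salpha i) = -1" and c2: "cform n E \<beta>2 (salpha i) = 1"
    and cj: "cform n E \<beta>1 (salpha j) = cform n E \<beta>2 (salpha j)"
  shows "ht n \<beta>2 \<noteq> ht n \<beta>1 + 2"
proof
  assume h: "ht n \<beta>2 = ht n \<beta>1 + 2"
  let ?\<delta> = "\<lambda>m. \<beta>2 m - \<beta>1 m - salpha i m"
  have "\<beta>2 \<noteq> \<beta>1" using c1 c2 by auto
  then have r: "?\<delta> \<in> roots n E"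
    using root_diff_sub_salpha[OF orth_set_root[OF X b(1)] orth_set_root[OF X b(2)] i _ c1 c2]
      orth_set_cform[OF X b(2,1)] by blast
  have "ht n ?\<delta> = 1" using h i by (simp add: ht_diff ht_salpha)
  moreover have "i \<noteq> j" using e edge_irrefl by blast
  then have "cform n E ?\<delta> (salpha j) = 1"
    using cj i j e by (simp add: cform_diff_left cform_salpha_salpha cartan_def)
  ultimately show False using cform_ht_one_root_ne_1[OF r _ j] by simp
qed

lemma orth_pairing_eq_add_salpha_salpha:
  assumes X: "orth_set n E X" and i: "i \<in> nodes n" and j: "j \<in> nodes n" and "i \<noteq> j" "\<not> E i j"
    and b: "\<beta>1 \<in> X" "\<beta>2 \<in> X" and h: "ht n \<beta>2 = ht n \<beta>1 + 2"
    and ci: "cform n E \<beta>1 (salpha i) = -1" "cform n E \<beta>2 (salpha i) = 1"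
    and cj: "cform n E \<beta>1 (salpha j) = -1" "cform n E \<beta>2 (salpha j) = 1"
  shows "\<beta>2 = (\<lambda>m. \<beta>1 m + salpha i m + salpha j m)"
proof -
  let ?\<delta> = "\<lambda>m. \<beta>2 m - \<beta>1 m - salpha i m"
  have "\<beta>2 \<noteq> \<beta>1" using ci by auto
  then have "?\<delta> \<in> roots n E"
    using root_diff_sub_salpha[OF orth_set_root[OF X b(1)] orth_set_root[OF X b(2)] i _ ci]
      orth_set_cform[OF X b(2,1)] by blast
  moreover have "cform n E ?\<delta> (salpha j) = 2"
    using assms(4,5) cj i j by (simp add: cform_diff_left cform_salpha_salpha cartan_def)
  ultimately have \<delta>: "?\<delta> = salpha j" using root_cform_salpha_eq_2 j by blast
  show ?thesis
  proof
    fix m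
    have "\<beta>2 m - \<beta>1 m - salpha i m = salpha j m" using fun_cong[OF \<delta>, of m] by simp
    then show "\<beta>2 m = \<beta>1 m + salpha i m + salpha j m" by linarith
  qed
qed

(* The only obstruction is a pair beta, beta + alpha_i + alpha_j in X; admissibility of
   r_i X then forces r_i X = r_j X. *)

lemma ascent_commuting:
  assumes X: "orth_set n E X" and i: "i \<in> nodes n" and j: "j \<in> nodes n" and ij: "i \<noteq> j" "\<not> E i j"
    and ai: "ascent X i" and aj: "salpha j \<notin> X"
    and ne: "ract i X \<noteq> ract j X"
    and adm: "\<forall>\<gamma>. \<gamma> \<in> ract i X
        \<and> (\<lambda>k. \<gamma> k - salpha i k + salpha j k) \<in> ract i X
      \<longrightarrow> ract i (ract i X)
        = ract j (ract i X)"
  shows "ascent (ract j X) i"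
proof -
  let ?x = "\<lambda>\<beta>. cform n E \<beta> (salpha i)" and ?y = "\<lambda>\<beta>. cform n E \<beta> (salpha j)"
  obtain b where b: "ascent_root X i b" using ai by (auto simp: ascent_def)
  then have bX: "b \<in> X" and xb: "?x b = -1" by (simp_all add: ascent_root_def)
  have ani: "salpha i \<notin> X" by (rule ascent_salpha_notin[OF X i ai])
  have x_rj: "?x (srefl n E j \<beta>) = ?x \<beta>" for \<beta>
    using cform_srefl_salpha_salpha[OF j i, of E \<beta>] ij edge_sym[of j i] by (auto simp: cartan_def)
  have "ht n (srefl n E j b) < ht n (srefl n E j \<gamma>)" if g: "\<gamma> \<in> X" "?x \<gamma> = 1" for \<gamma>
  proof (rule ccontr)
    assume "\<not> ?thesis"
    then have le: "ht n \<gamma> - ?y \<gamma> \<le> ht n b - ?y b" by (simp add: ht_srefl[OF j])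
    have "ht n b + 2 \<le> ht n \<gamma>" by (rule ascent_root_gap[OF X i b g])
    with le cform_orth_set_salpha_cases[OF X j aj bX] cform_orth_set_salpha_cases[OF X j aj g(1)]
    have bad: "?y b = -1" "?y \<gamma> = 1" "ht n \<gamma> = ht n b + 2" by auto
    then have \<gamma>: "\<gamma> = (\<lambda>m. b m + salpha i m + salpha j m)"
      using orth_pairing_eq_add_salpha_salpha[OF X i j ij bX g(1)] xb g(2) by blast
    have "srefl n E i b \<in> ract i X"
      using bX ract_eq_image[OF X i ani] by simp
    moreover have "(\<lambda>k. srefl n E i b k - salpha i k + salpha j k) = srefl n E i \<gamma>"
      using xb g(2) by (simp add: srefl_def \<gamma>)
    then have "(\<lambda>k. srefl n E i b k - salpha i k + salpha j k) \<in> ract i X"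
      using g(1) ract_eq_image[OF X i ani] by simp
    ultimately have "X = ract j (ract i X)"
      using adm ract_ract[OF X i] by auto
    then have "ract j X = ract i X"
      using ract_ract[OF orth_set_act_set[OF X srefl_in_weyl[OF i]] j] by simp
    with ne show False by simp
  qed
  then have "ascent_root (ract j X) i (srefl n E j b)"
    using bX xb x_rj ract_eq_image[OF X j aj] by (auto simp: ascent_root_def)
  then show ?thesis by (auto simp: ascent_def)
qed

context
  fixes X i j \<beta>i \<beta>j
  assumes X: "orth_set n E X" and i: "i \<in> nodes n" and j: "j \<in> nodes n" and e: "E i j"
    and \<beta>i: "ascent_root X i \<beta>i" and \<beta>j: "ascent_root X j \<beta>j"
begin

lemma braid_salpha_notin: "salpha i \<notin> X" "salpha j \<notin> X"
  using ascent_salpha_notin[OF X i] ascent_salpha_notin[OF X j] \<beta>i \<beta>j by (auto simp: ascent_def)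

lemma braid_cform_cases: "\<beta> \<in> X \<Longrightarrow> cform n E \<beta> (salpha i) \<in> {-1, 0, 1}" "\<beta> \<in> X \<Longrightarrow> cform n E \<beta> (salpha j) \<in> {-1, 0, 1}"
  using cform_orth_set_salpha_cases[OF X i braid_salpha_notin(1)]
    cform_orth_set_salpha_cases[OF X j braid_salpha_notin(2)] by auto

(* alpha_i + alpha_j has height 2, so it is not in X by the height gap at the ascent root
   beta_i; pairing with it bounds the sum of the two pairings. *)

lemma braid_cform_sum_cases:
  assumes "\<beta> \<in> X"
  shows "cform n E \<beta> (salpha i) + cform n E \<beta> (salpha j) \<in> {-1, 0, 1}"
proof -
  define \<rho> where "\<rho> = (\<lambda>k. salpha j k + salpha i k)"
  have cij: "cartan E j i = -1" using e edge_sym edge_irrefl by (auto simp: cartan_def)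
  have "\<rho> = srefl n E i (salpha j)"
    using cform_salpha_salpha[OF j i, of E] cij by (simp add: srefl_def \<rho>_def)
  then have r: "\<rho> \<in> roots n E" using srefl_root[OF i salpha_in_roots[OF j]] by simp
  then have p: "\<rho> \<in> pos_roots n E" by (simp add: pos_roots_def \<rho>_def salpha_def)
  have "cform n E \<rho> (salpha i) = 1"
    using i j cij cartan_sym[of j i] by (simp add: \<rho>_def cform_add_left cform_salpha_salpha cartan_def)
  moreover have "ht n \<rho> = 2" using i j by (simp add: \<rho>_def ht_add ht_salpha)
  moreover have "ht n \<beta>i \<ge> 1" using \<beta>i X by (simp add: ascent_root_def orth_set_pos_root pos_root_ht_ge_1)
  ultimately have "\<rho> \<notin> X" using ascent_root_gap[OF X i \<beta>i, of \<rho>] by auto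
  then have "\<beta> \<noteq> \<rho>" using assms by auto
  moreover have "\<beta> \<noteq> (\<lambda>k. - \<rho> k)" by (rule pos_root_ne_uminus[OF orth_set_pos_root[OF X assms] p])
  moreover have "cform n E \<beta> \<rho> = cform n E \<beta> (salpha i) + cform n E \<beta> (salpha j)"
    by (simp add: \<rho>_def cform_add_right)
  ultimately show ?thesis
    using cform_root_le_1[OF orth_set_root[OF X assms] r] cform_root_ge_neg_1[OF orth_set_root[OF X assms] r]
    by auto
qed

lemma braid_ascent_root_values:
  "cform n E \<beta>i (salpha j) \<in> {0, 1}" "cform n E \<beta>j (salpha i) \<in> {0, 1}"
  "\<not> (cform n E \<beta>i (salpha j) = 1 \<and> cform n E \<beta>j (salpha i) = 1)"
proof -
  have X_i: "\<beta>i \<in> X" "cform n E \<beta>i (salpha i) = -1" and X_j: "\<beta>j \<in> X" "cform n E \<beta>j (salpha j) = -1"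
    using \<beta>i \<beta>j by (simp_all add: ascent_root_def)
  show "cform n E \<beta>i (salpha j) \<in> {0, 1}" "cform n E \<beta>j (salpha i) \<in> {0, 1}"
    using braid_cform_sum_cases[OF X_i(1)] braid_cform_cases(2)[OF X_i(1)] X_i(2)
      braid_cform_sum_cases[OF X_j(1)] braid_cform_cases(1)[OF X_j(1)] X_j(2) by auto
  show "\<not> (cform n E \<beta>i (salpha j) = 1 \<and> cform n E \<beta>j (salpha i) = 1)"
    using ascent_root_gap[OF X j \<beta>j X_i(1)] ascent_root_gap[OF X i \<beta>i X_j(1)] by auto
qed

(* After applying r_j the heights become ht - (-, alpha_j); the witness minimises this among
   the roots pairing with alpha_i + alpha_j to -1. *)

lemma braid_lowest_root:
  obtains \<epsilon> where "\<epsilon> \<in> X" "cform n E \<epsilon> (salpha i) + cform n E \<epsilon> (salpha j) = -1"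
    "\<And>\<gamma>. \<gamma> \<in> X \<Longrightarrow> cform n E \<gamma> (salpha i) + cform n E \<gamma> (salpha j) = 1 \<Longrightarrow>
       ht n \<epsilon> - cform n E \<epsilon> (salpha j) < ht n \<gamma> - cform n E \<gamma> (salpha j)"
proof -
  let ?x = "\<lambda>\<beta>. cform n E \<beta> (salpha i)" and ?y = "\<lambda>\<beta>. cform n E \<beta> (salpha j)"
  let ?h = "\<lambda>\<beta>. ht n \<beta> - ?y \<beta>"
  have \<beta>i_X: "\<beta>i \<in> X" "?x \<beta>i = -1" and \<beta>j_X: "\<beta>j \<in> X" "?y \<beta>j = -1"
    using \<beta>i \<beta>j by (simp_all add: ascent_root_def)
  define C where "C = {\<beta>\<in>X. ?x \<beta> + ?y \<beta> = -1}"
  have "finite C" using orth_set_finite[OF X] by (simp add: C_def)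
  moreover have "C \<noteq> {}"
    using braid_ascent_root_values \<beta>i_X \<beta>j_X by (auto simp: C_def)
  ultimately have "Min (?h ` C) \<in> ?h ` C" by (intro Min_in) auto
  then obtain \<epsilon> where \<epsilon>: "\<epsilon> \<in> C" "?h \<epsilon> = Min (?h ` C)" by auto
  have \<epsilon>_min: "\<beta> \<in> C \<Longrightarrow> ?h \<epsilon> \<le> ?h \<beta>" for \<beta>
    using \<epsilon>(2) \<open>finite C\<close> by simp
  have \<epsilon>_\<beta>i: "?y \<beta>i = 0 \<Longrightarrow> ?h \<epsilon> \<le> ht n \<beta>i"
    using \<epsilon>_min[of \<beta>i] \<beta>i_X by (simp add: C_def)
  have \<epsilon>_\<beta>j: "?x \<beta>j = 0 \<Longrightarrow> ?h \<epsilon> \<le> ht n \<beta>j + 1"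
    using \<epsilon>_min[of \<beta>j] \<beta>j_X by (simp add: C_def)
  have less: "?h \<epsilon> < ?h \<gamma>" if \<gamma>: "\<gamma> \<in> X" "?x \<gamma> + ?y \<gamma> = 1" for \<gamma>
  proof -
    consider "?x \<gamma> = 1" "?y \<gamma> = 0" | "?x \<gamma> = 0" "?y \<gamma> = 1"
      using braid_cform_cases[OF \<gamma>(1)] \<gamma>(2) by auto
    then show ?thesis
    proof cases
      case 1
      have "ht n \<beta>i + 2 \<le> ht n \<gamma>" using ascent_root_gap[OF X i \<beta>i \<gamma>(1) 1(1)] .
      moreover have "?y \<beta>i = 1 \<Longrightarrow> ht n \<beta>j + 2 \<le> ht n \<beta>i"
        using ascent_root_gap[OF X j \<beta>j \<beta>i_X(1)] by simp
      ultimately show ?thesis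
        using 1 \<epsilon>_\<beta>i \<epsilon>_\<beta>j braid_ascent_root_values by auto
    next
      case 2
      have "ht n \<beta>j + 2 \<le> ht n \<gamma>" using ascent_root_gap[OF X j \<beta>j \<gamma>(1) 2(2)] .
      moreover have "?x \<beta>j = 0 \<Longrightarrow> ht n \<gamma> \<noteq> ht n \<beta>j + 2"
        using ht_pairing_ne_add_2[OF X j i edge_sym[OF e] \<beta>j_X(1) \<gamma>(1) \<beta>j_X(2) 2(2)] 2(1) by simp
      moreover have "?x \<beta>j = 1 \<Longrightarrow> ht n \<beta>i + 2 \<le> ht n \<beta>j"
        using ascent_root_gap[OF X i \<beta>i \<beta>j_X(1)] by simp
      ultimately show ?thesis
        using 2 \<epsilon>_\<beta>i \<epsilon>_\<beta>j braid_ascent_root_values by auto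
    qed
  qed
  with \<epsilon>(1) show ?thesis using that unfolding C_def by blast
qed

lemma ascent_braid_first: "ascent (ract j X) i"
proof -
  let ?x = "\<lambda>\<beta>. cform n E \<beta> (salpha i)" and ?y = "\<lambda>\<beta>. cform n E \<beta> (salpha j)"
  have cji: "cartan E j i = -1" using e edge_sym edge_irrefl by (auto simp: cartan_def)
  have x_rj: "?x (srefl n E j \<beta>) = ?x \<beta> + ?y \<beta>" for \<beta>
    using cform_srefl_salpha_salpha[OF j i, of E \<beta>] cji by simp
  obtain \<epsilon> where \<epsilon>: "\<epsilon> \<in> X" "?x \<epsilon> + ?y \<epsilon> = -1"
    and less: "\<And>\<gamma>. \<gamma> \<in> X \<Longrightarrow> ?x \<gamma> + ?y \<gamma> = 1 \<Longrightarrow> ht n \<epsilon> - ?y \<epsilon> < ht n \<gamma> - ?y \<gamma>"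
    using braid_lowest_root by blast
  have "ascent_root (srefl n E j ` X) i (srefl n E j \<epsilon>)"
    unfolding ascent_root_def
  proof (intro conjI ballI impI)
    show "srefl n E j \<epsilon> \<in> srefl n E j ` X" "?x (srefl n E j \<epsilon>) = -1"
      using \<epsilon> x_rj by auto
  next
    fix \<delta> assume "\<delta> \<in> srefl n E j ` X" "?x \<delta> = 1"
    then show "ht n (srefl n E j \<epsilon>) < ht n \<delta>"
      using less x_rj by (auto simp: ht_srefl[OF j])
  qed
  then show ?thesis
    using ract_eq_image[OF X j braid_salpha_notin(2)] by (auto simp: ascent_def)
qed

lemma ascent_braid_second: "ascent (ract i (ract j X)) j"
proof -
  let ?x = "\<lambda>\<beta>. cform n E \<beta> (salpha i)" and ?y = "\<lambda>\<beta>. cform n E \<beta> (salpha j)"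
  let ?r = "\<lambda>\<beta>. srefl n E i (srefl n E j \<beta>)"
  have Xj: "orth_set n E (ract j X)" by (rule orth_set_act_set[OF X srefl_in_weyl[OF j]])
  have R: "ract i (ract j X) = ?r ` X"
    using ract_eq_image[OF Xj i ascent_salpha_notin[OF Xj i ascent_braid_first]]
      ract_eq_image[OF X j braid_salpha_notin(2)] by (simp add: image_image)
  have cij: "cartan E i j = -1" "cartan E j i = -1" using e edge_sym edge_irrefl by (auto simp: cartan_def)
  have y_r: "?y (?r \<beta>) = ?x \<beta>" for \<beta>
    using cform_srefl_salpha_salpha[OF i j, of E "srefl n E j \<beta>"] cform_srefl_salpha_salpha[OF j i, of E \<beta>]
      cform_srefl_salpha[OF j, of \<beta>] cij by simp
  have ht_r: "ht n (?r \<beta>) = ht n \<beta> - ?x \<beta> - 2 * ?y \<beta>" for \<beta>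
    using ht_srefl[OF i, of E "srefl n E j \<beta>"] ht_srefl[OF j, of E \<beta>]
      cform_srefl_salpha_salpha[OF j i, of E \<beta>] cij by simp
  have \<beta>i_X: "\<beta>i \<in> X" "?x \<beta>i = -1" using \<beta>i by (simp_all add: ascent_root_def)
  have "ht n (?r \<beta>i) < ht n (?r \<gamma>)" if \<gamma>: "\<gamma> \<in> X" "?x \<gamma> = 1" for \<gamma>
  proof -
    have "ht n \<beta>i + 2 \<le> ht n \<gamma>" by (rule ascent_root_gap[OF X i \<beta>i \<gamma>])
    moreover have "?y \<gamma> \<in> {-1, 0}" using braid_cform_sum_cases[OF \<gamma>(1)] braid_cform_cases(2)[OF \<gamma>(1)] \<gamma>(2) by auto
    moreover have "?y \<beta>i = 0 \<Longrightarrow> ?y \<gamma> = 0 \<Longrightarrow> ht n \<gamma> \<noteq> ht n \<beta>i + 2"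
      using ht_pairing_ne_add_2[OF X i j e \<beta>i_X(1) \<gamma>(1) \<beta>i_X(2) \<gamma>(2)] by simp
    ultimately show ?thesis
      using \<gamma>(2) \<beta>i_X(2) braid_ascent_root_values(1) by (auto simp: ht_r)
  qed
  then have "ascent_root (?r ` X) j (?r \<beta>i)"
    using \<beta>i_X y_r by (auto simp: ascent_root_def)
  then show ?thesis using R by (auto simp: ascent_def)
qed

end

lemma ascent_braid:
  assumes X: "orth_set n E X" and i: "i \<in> nodes n" and j: "j \<in> nodes n" and e: "E i j"
    and "ascent X i" "ascent X j"
  shows "ascent (ract j X) i"
    and "ascent (ract i (ract j X)) j"
proof -
  obtain \<beta>i \<beta>j where "ascent_root X i \<beta>i" "ascent_root X j \<beta>j"
    using assms(5,6) by (auto simp: ascent_def)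
  then show "ascent (ract j X) i"
    and "ascent (ract i (ract j X)) j"
    using ascent_braid_first[OF X i j e] ascent_braid_second[OF X i j e] by blast+
qed

end

section \<open>Depth in the orbit\<close>

locale monoidal_poset = sl_diagram +
  fixes BB :: "(nat \<Rightarrow> int) set set" and B0 :: "(nat \<Rightarrow> int) set"
  assumes admissible: "admissible n E BB"
    and B0_in: "B0 \<in> BB"
    and B0_maximal: "\<forall>C. (B0, C) \<notin> mon_less n E BB"
begin

lemma orbit_orth_set: "X \<in> BB \<Longrightarrow> orth_set n E X"
  using admissible orth_set_act_set unfolding admissible_def by blast

lemma orbit_subset_roots: "X \<in> BB \<Longrightarrow> X \<subseteq> roots n E"
  using orbit_orth_set orth_set_root by blast

lemma orbit_act_set:
  assumes X: "X \<in> BB" and w: "w \<in> weyl n E"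
  shows "act_set n E w X \<in> BB"
proof -
  obtain B where B: "orth_set n E B" "BB = {act_set n E w B | w. w \<in> weyl n E}"
    using admissible unfolding admissible_def by blast
  obtain u where u: "u \<in> weyl n E" "X = act_set n E u B" using X B(2) by blast
  have "act_set n E w X = act_set n E (w \<circ> u) B"
    using act_set_comp[OF w u(1)] orth_set_root[OF B(1)] u(2) by blast
  then show ?thesis using B(2) comp_in_weyl[OF w u(1)] by blast
qed

lemma orbit_ract: "X \<in> BB \<Longrightarrow> i \<in> nodes n \<Longrightarrow> ract i X \<in> BB"
  using orbit_act_set srefl_in_weyl by blast

lemma orbit_from_B0:
  assumes X: "X \<in> BB"
  obtains w where "w \<in> weyl n E" "act_set n E w B0 = X"
proof -
  obtain B where B: "orth_set n E B" "BB = {act_set n E w B | w. w \<in> weyl n E}"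
    using admissible unfolding admissible_def by blast
  obtain u where u: "u \<in> weyl n E" "B0 = act_set n E u B" using B0_in B(2) by blast
  obtain v where v: "v \<in> weyl n E" "X = act_set n E v B" using X B(2) by blast
  obtain u' where u': "u' \<in> weyl n E" "u' \<circ> u = id" using weyl_inverse[OF u(1)] by blast
  have "act_set n E (v \<circ> u') B0 = act_set n E (v \<circ> u' \<circ> u) B"
    unfolding u(2) using act_set_comp[OF comp_in_weyl[OF v(1) u'(1)] u(1)] orth_set_root[OF B(1)]
    by blast
  also have "v \<circ> u' \<circ> u = v" using u'(2) by (simp add: comp_assoc)
  finally show ?thesis using that v comp_in_weyl[OF v(1) u'(1)] by blast
qed

definition depth :: "(nat \<Rightarrow> int) set \<Rightarrow> nat" where
  "depth X = (LEAST k. \<exists>ws. set ws \<subseteq> nodes n \<and> length ws = k \<and> act_set n E (word_act n E ws) B0 = X)"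

lemma depth_word:
  assumes X: "X \<in> BB"
  obtains ws where "set ws \<subseteq> nodes n" "length ws = depth X" "act_set n E (word_act n E ws) B0 = X"
proof -
  obtain w where w: "w \<in> weyl n E" "act_set n E w B0 = X" using orbit_from_B0[OF X] .
  then have "\<exists>k ws. set ws \<subseteq> nodes n \<and> length ws = k \<and> act_set n E (word_act n E ws) B0 = X"
    by (auto simp: weyl_iff)
  from LeastI_ex[OF this] that show ?thesis unfolding depth_def by blast
qed

lemma depth_le: "set ws \<subseteq> nodes n \<Longrightarrow> act_set n E (word_act n E ws) B0 = X \<Longrightarrow> depth X \<le> length ws"
  unfolding depth_def by (rule Least_le) blast

lemma depth_le_wlen: "w \<in> weyl n E \<Longrightarrow> act_set n E w B0 = X \<Longrightarrow> depth X \<le> wlen n E w"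
  by (metis depth_le reduced_word_exists)

lemma act_set_word_Cons:
  "set ws \<subseteq> nodes n \<Longrightarrow> i \<in> nodes n \<Longrightarrow>
   act_set n E (word_act n E (i # ws)) B0 = ract i (act_set n E (word_act n E ws) B0)"
  using ract_act_set[OF orbit_subset_roots[OF B0_in] _ word_act_in_weyl] by simp

lemma depth_ract_le:
  assumes X: "X \<in> BB" and i: "i \<in> nodes n"
  shows "depth (ract i X) \<le> depth X + 1"
proof -
  obtain ws where ws: "set ws \<subseteq> nodes n" "length ws = depth X" "act_set n E (word_act n E ws) B0 = X"
    using depth_word[OF X] .
  then have "depth (ract i X) \<le> length (i # ws)"
    using i act_set_word_Cons[OF ws(1) i] by (intro depth_le) auto
  with ws(2) show ?thesis by simp
qed

lemma depth_eq_0: "X \<in> BB \<Longrightarrow> depth X = 0 \<Longrightarrow> X = B0"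
  using act_set_id[of B0] orbit_orth_set[OF B0_in] depth_word[of X] by (force simp: orth_set_def)

lemma depth_Suc:
  assumes X: "X \<in> BB" and d: "depth X = Suc m"
  obtains j Y where "j \<in> nodes n" "Y \<in> BB" "X = ract j Y" "depth Y \<le> m"
proof -
  obtain ws where ws: "set ws \<subseteq> nodes n" "length ws = depth X" "act_set n E (word_act n E ws) B0 = X"
    using depth_word[OF X] .
  then obtain j ws' where jw: "ws = j # ws'" using d by (cases ws) auto
  let ?Y = "act_set n E (word_act n E ws') B0"
  have j: "j \<in> nodes n" and ws': "set ws' \<subseteq> nodes n" using ws(1) jw by auto
  show ?thesis
  proof (rule that[OF j])
    show "?Y \<in> BB" by (rule orbit_act_set[OF B0_in word_act_in_weyl[OF ws']])
    show "X = ract j ?Y" using act_set_word_Cons[OF ws' j] ws(3) jw by simp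
    show "depth ?Y \<le> m" using depth_le[OF ws' refl] ws(2) d jw by simp
  qed
qed

lemma prec_in_mon_less:
  "B \<in> BB \<Longrightarrow> j \<in> nodes n \<Longrightarrow> prec n B (ract j B) \<Longrightarrow>
   (B, ract j B) \<in> mon_less n E BB"
  unfolding mon_less_def by (rule r_into_trancl) blast

lemma depth_less_braid:
  assumes IH: "\<And>Z k. Z \<in> BB \<Longrightarrow> k \<in> nodes n \<Longrightarrow> depth Z < depth X \<Longrightarrow>
      prec n Z (ract k Z) \<Longrightarrow> depth (ract k Z) < depth Z"
    and X: "X \<in> BB" and i: "i \<in> nodes n" and j: "j \<in> nodes n" and e: "E i j"
    and ai: "ascent X i" and aj: "ascent X j"
    and dY: "depth (ract j X) < depth X"
  shows "depth (ract i X) < depth X"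
proof -
  let ?Y = "ract j X"
  have Y: "?Y \<in> BB" and Z: "ract i ?Y \<in> BB" and W: "ract j (ract i ?Y) \<in> BB"
    using X i j by (simp_all add: orbit_ract)
  have "prec n ?Y (ract i ?Y)"
    using ascent_braid(1)[OF orbit_orth_set[OF X] i j e ai aj] prec_ract_iff_ascent[OF orbit_orth_set[OF Y] i]
    by simp
  then have d1: "depth (ract i ?Y) < depth ?Y" using IH[OF Y i dY] by blast
  have "prec n (ract i ?Y) (ract j (ract i ?Y))"
    using ascent_braid(2)[OF orbit_orth_set[OF X] i j e ai aj] prec_ract_iff_ascent[OF orbit_orth_set[OF Z] j]
    by simp
  then have d2: "depth (ract j (ract i ?Y)) < depth (ract i ?Y)" using IH[OF Z j] d1 dY by simp
  have "ract i X = ract j (ract i (ract j (ract i ?Y)))"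
    using ract_braid[OF orbit_orth_set[OF Z] i j e] ract_ract[OF orbit_orth_set[OF Y] i]
      ract_ract[OF orbit_orth_set[OF X] j] by simp
  moreover have "depth (ract j (ract i (ract j (ract i ?Y)))) \<le> depth (ract j (ract i ?Y)) + 2"
    using depth_ract_le[OF W i] depth_ract_le[OF orbit_ract[OF W i] j] by simp
  ultimately show ?thesis using d1 d2 dY by simp
qed

lemma depth_less_commuting:
  assumes IH: "\<And>Z k. Z \<in> BB \<Longrightarrow> k \<in> nodes n \<Longrightarrow> depth Z < depth X \<Longrightarrow>
      prec n Z (ract k Z) \<Longrightarrow> depth (ract k Z) < depth Z"
    and X: "X \<in> BB" and i: "i \<in> nodes n" and j: "j \<in> nodes n" and ij: "i \<noteq> j" "\<not> E i j"
    and ai: "ascent X i" and aj: "ascent X j"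
    and ne: "ract i X \<noteq> ract j X"
    and dY: "depth (ract j X) < depth X"
  shows "depth (ract i X) < depth X"
proof -
  let ?Y = "ract j X"
  have Xo: "orth_set n E X" and Y: "?Y \<in> BB" using X j by (simp_all add: orbit_orth_set orbit_ract)
  have adm: "\<forall>\<gamma>. \<gamma> \<in> ract i X \<and> (\<lambda>k. \<gamma> k - salpha i k + salpha j k) \<in> ract i X
      \<longrightarrow> ract i (ract i X) = ract j (ract i X)"
    using admissible orbit_ract[OF X i] i j ij unfolding admissible_def by blast
  have "prec n ?Y (ract i ?Y)"
    using ascent_commuting[OF Xo i j ij ai ascent_salpha_notin[OF Xo j aj] ne adm]
      prec_ract_iff_ascent[OF orbit_orth_set[OF Y] i] by simp
  then have "depth (ract i ?Y) < depth ?Y" using IH[OF Y i dY] by blast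
  moreover have "ract i X = ract j (ract i ?Y)"
    using ract_commute[OF orbit_orth_set[OF Y] i j ij] ract_ract[OF Xo j] by simp
  ultimately show ?thesis using depth_ract_le[OF orbit_ract[OF Y i] j] dY by simp
qed

(* Induction on the depth: write X = r_j Y with Y closer to B0. Then also X < r_j X, so i
   and j are both ascents of X, and the braid or commutation relation of r_i and r_j yields a
   path from B0 to r_i X no longer than the one to Y. *)

lemma prec_depth_less:
  "X \<in> BB \<Longrightarrow> i \<in> nodes n \<Longrightarrow> prec n X (ract i X) \<Longrightarrow>
   depth (ract i X) < depth X"
proof (induction "depth X" arbitrary: X i rule: less_induct)
  case less
  have IH: "depth (ract k Z) < depth Z"
    if "Z \<in> BB" "k \<in> nodes n" "depth Z < depth X" "prec n Z (ract k Z)" for Z k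
    using less.hyps that by blast
  have X: "X \<in> BB" and i: "i \<in> nodes n" and p: "prec n X (ract i X)" by (fact less.prems)+
  show ?case
  proof (cases "depth X")
    case 0
    then have "X = B0" using depth_eq_0[OF X] by simp
    then show ?thesis using prec_in_mon_less[OF X i p] B0_maximal by simp
  next
    case (Suc m)
    then obtain j Y where j: "j \<in> nodes n" and Y: "Y \<in> BB" "X = ract j Y" "depth Y \<le> m"
      using depth_Suc[OF X] by blast
    have XY: "ract j X = Y" using ract_ract[OF orbit_orth_set[OF Y(1)] j] Y(2) by simp
    have dY: "depth (ract j X) < depth X" using XY Y(3) Suc by simp
    have "\<not> prec n Y X" using IH[OF Y(1) j] Y(2) dY XY by auto
    moreover have "X \<noteq> Y" using dY XY by auto
    ultimately have "prec n X (ract j X)"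
      using prec_ract_cases[OF orbit_orth_set[OF Y(1)] j] Y(2) XY by auto
    then have ai: "ascent X i" and aj: "ascent X j"
      using p prec_ract_iff_ascent[OF orbit_orth_set[OF X]] i j by simp_all
    consider "ract i X = ract j X" | "i \<noteq> j" "E i j" | "i \<noteq> j" "\<not> E i j" "ract i X \<noteq> ract j X"
      by blast
    then show ?thesis
    proof cases
      case 1
      then show ?thesis using dY by simp
    next
      case 2
      then show ?thesis using depth_less_braid[OF IH X i j _ ai aj dY] by blast
    next
      case 3
      then show ?thesis using depth_less_commuting[OF IH X i j _ _ ai aj _ dY] by blast
    qed
  qed
qed

lemma mon_less_depth:
  "(X, Z) \<in> mon_less n E BB \<Longrightarrow> X \<in> BB \<and> Z \<in> BB \<and> depth Z < depth X"
  unfolding mon_less_def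
proof (induction rule: trancl_induct)
  case (base Z)
  then show ?case using prec_depth_less orbit_ract by blast
next
  case (step Y Z)
  then show ?case using prec_depth_less orbit_ract by fastforce
qed

lemma depth_min_rep:
  assumes B: "B \<in> BB" and m: "min_rep n E B0 B w"
  shows "depth B = wlen n E w"
proof -
  obtain ws where ws: "set ws \<subseteq> nodes n" "length ws = depth B" "act_set n E (word_act n E ws) B0 = B"
    using depth_word[OF B] .
  have "wlen n E w \<le> wlen n E (word_act n E ws)"
    using m ws word_act_in_weyl[OF ws(1)] by (auto simp: min_rep_def)
  also have "\<dots> \<le> depth B" using wlen_word_act_le[OF ws(1)] ws(2) by simp
  finally show ?thesis using depth_le_wlen m by (force simp: min_rep_def)
qed

lemma min_rep_descent_mon_less:
  assumes B: "B \<in> BB" and m: "min_rep n E B0 B w" and i: "i \<in> nodes n"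
    and l: "wlen n E (srefl n E i \<circ> w) < wlen n E w"
  shows "(B, ract i B) \<in> mon_less n E BB"
proof -
  let ?R = "ract i B"
  have w: "w \<in> weyl n E" "act_set n E w B0 = B" using m by (auto simp: min_rep_def)
  have "act_set n E (srefl n E i \<circ> w) B0 = ?R"
    using ract_act_set[OF orbit_subset_roots[OF B0_in] i w(1)] w(2) by simp
  then have "depth ?R \<le> wlen n E (srefl n E i \<circ> w)"
    using depth_le_wlen comp_in_weyl[OF srefl_in_weyl[OF i] w(1)] by blast
  then have lt: "depth ?R < depth B" using l depth_min_rep[OF B m] by simp
  have "\<not> prec n ?R B"
    using prec_depth_less[OF orbit_ract[OF B i] i] ract_ract[OF orbit_orth_set[OF B] i] lt
    by auto
  moreover have "?R \<noteq> B" using lt by auto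
  ultimately have "prec n B ?R" using prec_ract_cases[OF orbit_orth_set[OF B] i] by blast
  then show ?thesis by (rule prec_in_mon_less[OF B i])
qed

lemma mon_less_min_rep_descent:
  assumes B: "B \<in> BB" and m: "min_rep n E B0 B w" and i: "i \<in> nodes n"
    and p: "(B, ract i B) \<in> mon_less n E BB"
  obtains w'' where "w'' \<in> weyl n E" "wlen n E w'' = wlen n E w" "act_set n E w'' B0 = B"
    "wlen n E (srefl n E i \<circ> w'') < wlen n E w''"
proof -
  let ?R = "ract i B"
  have R: "?R \<in> BB" "depth ?R < depth B" using mon_less_depth[OF p] by auto
  obtain ws where ws: "set ws \<subseteq> nodes n" "length ws = depth ?R" "act_set n E (word_act n E ws) B0 = ?R"
    using depth_word[OF R(1)] .
  let ?v = "word_act n E ws"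
  let ?w = "srefl n E i \<circ> ?v"
  have v: "?v \<in> weyl n E" and w: "?w \<in> weyl n E"
    using ws(1) i by (simp_all add: word_act_in_weyl comp_in_weyl srefl_in_weyl)
  have act: "act_set n E ?w B0 = B"
    using ract_act_set[OF orbit_subset_roots[OF B0_in] i v] ws(3)
      ract_ract[OF orbit_orth_set[OF B] i] by simp
  have "wlen n E w \<le> wlen n E ?w" using m w act by (auto simp: min_rep_def)
  moreover have "wlen n E ?w \<le> wlen n E ?v + 1" by (rule wlen_srefl_comp_le[OF i v])
  moreover have "wlen n E ?v \<le> depth ?R" using wlen_word_act_le[OF ws(1)] ws(2) by simp
  moreover have "srefl n E i \<circ> ?w = ?v"
    using srefl_comp_srefl[OF i] by (simp add: comp_assoc[symmetric])
  ultimately show ?thesis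
    using that[OF w _ act] R(2) depth_min_rep[OF B m] by simp
qed

end

theorem lemma3p8:
  fixes n :: nat and E :: "nat \<Rightarrow> nat \<Rightarrow> bool"
    and \<B> :: "(nat \<Rightarrow> int) set set" and B0 :: "(nat \<Rightarrow> int) set"
  assumes diag: "sl_spherical n E"
    and adm: "admissible n E \<B>"
    and B0_in: "B0 \<in> \<B>"
    and B0_max: "\<forall>C. (B0, C) \<notin> mon_less n E \<B>"
    and B0_unique: "\<forall>C\<in>\<B>. (\<forall>D. (C, D) \<notin> mon_less n E \<B>) \<longrightarrow> C = B0"
  shows "(\<forall>B\<in>\<B>. \<forall>w. min_rep n E B0 B w \<longrightarrow>
            (\<forall>i\<in>nodes n. wlen n E (srefl n E i \<circ> w) < wlen n E w \<longrightarrow>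
               (B, act_set n E (srefl n E i) B) \<in> mon_less n E \<B>))
       \<and> (\<forall>B\<in>\<B>. \<forall>w w'. min_rep n E B0 B w \<and> min_rep n E B0 B w' \<longrightarrow>
            wlen n E w = wlen n E w' \<and>
            (\<forall>i\<in>nodes n. (B, act_set n E (srefl n E i) B) \<in> mon_less n E \<B> \<longrightarrow>
               (\<exists>w''\<in>weyl n E. wlen n E w'' = wlen n E w \<and> act_set n E w'' B0 = B \<and>
                  wlen n E (srefl n E i \<circ> w'') < wlen n E w'')))"
proof -
  interpret monoidal_poset n E \<B> B0
    using diag adm B0_in B0_max
    unfolding monoidal_poset_def monoidal_poset_axioms_def sl_diagram_def by blast
  show ?thesis
  proof (intro conjI ballI allI impI)
    fix B w i
    assume "B \<in> \<B>" "min_rep n E B0 B w" "i \<in> nodes n" "wlen n E (srefl n E i \<circ> w) < wlen n E w"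
    then show "(B, act_set n E (srefl n E i) B) \<in> mon_less n E \<B>"
      by (rule min_rep_descent_mon_less)
  next
    fix B w w'
    assume B: "B \<in> \<B>" and m: "min_rep n E B0 B w \<and> min_rep n E B0 B w'"
    then show "wlen n E w = wlen n E w'"
      by (auto simp: min_rep_def intro: order.antisym)
    fix i
    assume "i \<in> nodes n" "(B, act_set n E (srefl n E i) B) \<in> mon_less n E \<B>"
    then show "\<exists>w''\<in>weyl n E. wlen n E w'' = wlen n E w \<and> act_set n E w'' B0 = B \<and>
                  wlen n E (srefl n E i \<circ> w'') < wlen n E w''"
      using mon_less_min_rep_descent[OF B conjunct1[OF m]] by metis
  qed
qed

end
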